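(* Let $n\ge2$. For every $n$-qubit genuinely entangled state $\rho$, $L(\rho)-l(\rho)\le\max\{0,n-2\}$. Moreover, every state $\rho=\sum_{i=0}^n\lambda_i|D_n^i\rangle\langle D_n^i|$ with $\lambda_i\ge0$, $\sum_i\lambda_i=1$, $\lambda_0\lambda_n\neq0$ and $$\sum_{i,j=0}^n(n-i)j\,\lambda_i\lambda_j\big[(n-i-1)(j-1)-i(n-j)\big]<0$$ is genuinely entangled and satisfies $L(\rho)=n$, $l(\rho)=2$, so $L(\rho)-l(\rho)=n-2$.
   Context: Let $[n]=\{1,\dots,n\}$, $\mathcal H_{[n]}=(\mathbb C^2)^{\otimes n}$; for $S\subseteq[n]$, $\rho_S$ is the partial trace over qubits outside $S$. A pure state is biseparable if it is a product $|\alpha\rangle_S\otimes|\beta\rangle_{\bar S}$ for some $\emptyset\ne S\subsetneq[n]$; a mixed state is biseparable if it is a convex combination of biseparable pure states; genuinely entangled = not biseparable. $\mathcal C(\rho,\mathcal S)=\{\sigma\text{ density matrix}:\sigma_S=\rho_S\ \forall S\in\mathcal S\}$; $\mathcal S$ determines $\rho$ if $\mathcal C(\rho,\mathcal S)=\{\rho\}$, detects $\rho$'s GME if every element of $\mathcal C(\rho,\mathcal S)$ is genuinely entangled. $L(\rho)=\min_{\mathcal S\text{ determines }\rho}\max_{S\in\mathcal S}|S|$, $l(\rho)=\min_{\mathcal S\text{ detects }\rho\text{'s GME}}\max_{S\in\mathcal S}|S|$. Dicke states: $|D_n^i\rangle=\binom{n}{i}^{-1/2}\sum_{s\in\{0,1\}^n,\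 \sum_js_j=i}|s_1\rangle\otimes\cdots\otimes|s_n\rangle$. *)

theory Defs
  imports Complex_Main
begin

text \<open>A computational basis vector |s_1...s_n> of the qubits
in a set T is encoded by the set a \<subseteq> T of qubits in state |1>. Operators on the
qubits T are functions M :: nat set \<Rightarrow> nat set \<Rightarrow> complex, vanishing outside Pow T \<times> Pow T.\<close>

definition qubits :: "nat \<Rightarrow> nat set" where
  "qubits n = {1..n}"

definition density :: "nat set \<Rightarrow> (nat set \<Rightarrow> nat set \<Rightarrow> complex) \<Rightarrow> bool" where
  "density T M \<longleftrightarrow>
     (\<forall>a b. (a \<notin> Pow T \<or> b \<notin> Pow T) \<longrightarrow> M a b = 0) \<and>
     (\<forall>a b. M b a = cnj (M a b)) \<and>
     (\<forall>v :: nat set \<Rightarrow> complex.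
        0 \<le> Re (\<Sum>a\<in>Pow T. \<Sum>b\<in>Pow T. cnj (v a) * M a b * v b)) \<and>
     (\<Sum>a\<in>Pow T. M a a) = 1"

definition ptrace :: "nat \<Rightarrow> nat set \<Rightarrow> (nat set \<Rightarrow> nat set \<Rightarrow> complex) \<Rightarrow> nat set \<Rightarrow> nat set \<Rightarrow> complex" where
  "ptrace n S M a b =
     (if a \<subseteq> S \<and> b \<subseteq> S then (\<Sum>c\<in>Pow (qubits n - S). M (a \<union> c) (b \<union> c)) else 0)"

definition proj :: "(nat set \<Rightarrow> complex) \<Rightarrow> nat set \<Rightarrow> nat set \<Rightarrow> complex" where
  "proj \<psi> a b = \<psi> a * cnj (\<psi> b)"

definition unit_vec :: "nat set \<Rightarrow> (nat set \<Rightarrow> complex) \<Rightarrow> bool" where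
  "unit_vec T \<psi> \<longleftrightarrow> (\<forall>a. a \<notin> Pow T \<longrightarrow> \<psi> a = 0) \<and> (\<Sum>a\<in>Pow T. (cmod (\<psi> a))\<^sup>2) = 1"

definition bisep_pure :: "nat \<Rightarrow> (nat set \<Rightarrow> complex) \<Rightarrow> bool" where
  "bisep_pure n \<psi> \<longleftrightarrow> unit_vec (qubits n) \<psi> \<and>
     (\<exists>S \<alpha> \<beta>. S \<noteq> {} \<and> S \<subset> qubits n \<and>
        (\<forall>a. a \<subseteq> qubits n \<longrightarrow> \<psi> a = \<alpha> (a \<inter> S) * \<beta> (a - S)))"

definition biseparable :: "nat \<Rightarrow> (nat set \<Rightarrow> nat set \<Rightarrow> complex) \<Rightarrow> bool" where
  "biseparable n M \<longleftrightarrow>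
     (\<exists>(m::nat) (p :: nat \<Rightarrow> real) \<psi>.
        (\<forall>i<m. 0 \<le> p i \<and> bisep_pure n (\<psi> i)) \<and> (\<Sum>i<m. p i) = 1 \<and>
        M = (\<lambda>a b. \<Sum>i<m. complex_of_real (p i) * proj (\<psi> i) a b))"

definition genuinely_entangled :: "nat \<Rightarrow> (nat set \<Rightarrow> nat set \<Rightarrow> complex) \<Rightarrow> bool" where
  "genuinely_entangled n M \<longleftrightarrow> \<not> biseparable n M"

definition compat :: "nat \<Rightarrow> (nat set \<Rightarrow> nat set \<Rightarrow> complex) \<Rightarrow> nat set set
                       \<Rightarrow> (nat set \<Rightarrow> nat set \<Rightarrow> complex) set" where
  "compat n \<rho> \<S> = {\<sigma>. density (qubits n) \<sigma> \<and> (\<forall>S\<in>\<S>. ptrace n S \<sigma> = ptrace n S \<rho>)}"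

definition determines :: "nat \<Rightarrow> nat set set \<Rightarrow> (nat set \<Rightarrow> nat set \<Rightarrow> complex) \<Rightarrow> bool" where
  "determines n \<S> \<rho> \<longleftrightarrow> compat n \<rho> \<S> = {\<rho>}"

definition detects_GME :: "nat \<Rightarrow> nat set set \<Rightarrow> (nat set \<Rightarrow> nat set \<Rightarrow> complex) \<Rightarrow> bool" where
  "detects_GME n \<S> \<rho> \<longleftrightarrow> (\<forall>\<sigma>\<in>compat n \<rho> \<S>. genuinely_entangled n \<sigma>)"

text \<open>min over collections \<S> of subsets of [n] of max_{S\<in>\<S>} |S|, written with LEAST
(the max over an empty collection is read as 0).\<close>
definition L_num :: "nat \<Rightarrow> (nat set \<Rightarrow> nat set \<Rightarrow> complex) \<Rightarrow> nat" where
  "L_num n \<rho> = (LEAST k. \<exists>\<S>. \<S> \<subseteq> Pow (qubits n) \<and> determines n \<S> \<rho> \<and> (\<forall>S\<in>\<S>. card S \<le> k))"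

definition l_num :: "nat \<Rightarrow> (nat set \<Rightarrow> nat set \<Rightarrow> complex) \<Rightarrow> nat" where
  "l_num n \<rho> = (LEAST k. \<exists>\<S>. \<S> \<subseteq> Pow (qubits n) \<and> detects_GME n \<S> \<rho> \<and> (\<forall>S\<in>\<S>. card S \<le> k))"

definition dicke :: "nat \<Rightarrow> nat \<Rightarrow> nat set \<Rightarrow> complex" where
  "dicke n i a = (if a \<subseteq> qubits n \<and> card a = i then complex_of_real (1 / sqrt (real (n choose i))) else 0)"

definition dicke_mix :: "nat \<Rightarrow> (nat \<Rightarrow> real) \<Rightarrow> nat set \<Rightarrow> nat set \<Rightarrow> complex" where
  "dicke_mix n lam a b = (\<Sum>i=0..n. complex_of_real (lam i) * proj (dicke n i) a b)"

end

(*
  L <= n holds for every state, since the whole state determines itself.  For l >= 2 it suffices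
  that one-body marginals never certify genuine entanglement: they are reproduced by the tensor
  product of the single-qubit marginals, which is biseparable because every qubit density matrix
  is a mixture of two pure states.

  For the Dicke mixture rho, adding eps (|0...0><1...1| + |1...1><0...0|) with eps = min lam_0 lam_n
  gives a second state with the same proper marginals, so L = n.  Conversely, let sigma be a
  biseparable state with the same two-body marginals as rho.  These marginals carry no singlet
  weight, so every pure component psi of sigma is permutation symmetric, and across the cut of
  psi the product structure gives |psi(c + i)|^2 = |psi(c)| |psi(c + i + j)|.  Summing, the
  diagonal weights A, C, B of |00>, |10>, |11> in the marginal on qubits 1, 2 satisfy C^2 <= A B,
  whereas the hypothesis on lam says exactly that C^2 > A B.  Hence pairs detect genuine
  entanglement and l = 2.
*)

theory Submission
  imports Defs
begin

lemma finite_qubits [simp]: "finite (qubits n)"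
  by (simp add: qubits_def)

lemma card_qubits [simp]: "card (qubits n) = n"
  by (simp add: qubits_def)

lemma finite_subset_qubits: "a \<subseteq> qubits n \<Longrightarrow> finite a"
  by (erule finite_subset) simp

lemma sum_Pow_prod:
  fixes g :: "'a \<Rightarrow> bool \<Rightarrow> 'c::comm_semiring_1"
  assumes "finite A"
  shows "(\<Sum>R\<in>Pow A. \<Prod>q\<in>A. g q (q \<in> R)) = (\<Prod>q\<in>A. g q True + g q False)"
proof -
  have "(\<Prod>q\<in>A. g q (q \<in> R)) = (\<Prod>q\<in>R. g q True) * (\<Prod>q\<in>A - R. g q False)" if "R \<subseteq> A" for R
  proof -
    have "(\<Prod>q\<in>A. g q (q \<in> R)) = (\<Prod>q\<in>A - R. g q (q \<in> R)) * (\<Prod>q\<in>R. g q (q \<in> R))"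
      using that assms by (rule prod.subset_diff)
    then show ?thesis by (simp add: mult.commute)
  qed
  then show ?thesis
    by (simp add: prod_add[OF assms])
qed

lemma sum_Pow_card:
  assumes "finite T"
  shows "(\<Sum>c\<in>Pow T. f (card c)) = (\<Sum>s\<le>card T. of_nat (card T choose s) * f s)"
proof -
  have "(\<Sum>c\<in>Pow T. f (card c)) = (\<Sum>s\<le>card T. \<Sum>c\<in>{c \<in> Pow T. card c = s}. f (card c))"
    by (rule sum.group[symmetric]) (use assms card_mono in auto)
  also have "\<dots> = (\<Sum>s\<le>card T. of_nat (card T choose s) * f s)"
    using n_subsets[OF assms] by (simp add: Pow_def)
  finally show ?thesis .
qed

lemma sum_Pow_insert:
  assumes "finite T" "q \<notin> T"
  shows "(\<Sum>a\<in>Pow (insert q T). f a) = (\<Sum>c\<in>Pow T. f c + f (insert q c))"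
proof -
  have inj: "inj_on (insert q) (Pow T)"
    using assms(2) by (intro inj_onI) (metis Pow_iff insert_ident subsetD)
  have "(\<Sum>a\<in>Pow (insert q T). f a) = (\<Sum>a\<in>Pow T. f a) + (\<Sum>a\<in>insert q ` Pow T. f a)"
    unfolding Pow_insert by (rule sum.union_disjoint) (use assms in auto)
  also have "(\<Sum>a\<in>insert q ` Pow T. f a) = (\<Sum>c\<in>Pow T. f (insert q c))"
    by (rule sum.reindex[OF inj, unfolded comp_def])
  finally show ?thesis by (simp add: sum.distrib)
qed

lemma mult_cnj_eq_cmod_sq: "z * cnj z = complex_of_real ((cmod z)\<^sup>2)"
  by (simp add: complex_mult_cnj cmod_power2)

lemma cmod_diff_sq:
  fixes a b :: complex
  shows "a * cnj a + b * cnj b - a * cnj b - b * cnj a = complex_of_real ((cmod (a - b))\<^sup>2)"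
proof -
  have "a * cnj a + b * cnj b - a * cnj b - b * cnj a = (a - b) * cnj (a - b)"
    by (simp add: algebra_simps)
  then show ?thesis
    by (simp only: mult_cnj_eq_cmod_sq)
qed

lemma sq_le_mult_if_le_arith_mean:
  fixes A B C :: real
  assumes "0 \<le> A" "0 \<le> B" "0 \<le> C"
    and mean: "\<And>t. t > 0 \<Longrightarrow> C \<le> (t * A + B / t) / 2"
  shows "C\<^sup>2 \<le> A * B"
proof (cases "C = 0")
  case False
  then have C: "C > 0" using assms(3) by simp
  show ?thesis
  proof (cases "A = 0")
    case True
    have "C \<le> B / ((B + 1) / C) / 2"
      using mean[of "(B + 1) / C"] C assms(2) True by simp
    also have "\<dots> = C * (B / (B + 1)) / 2"
      using C assms(2) by (simp add: field_simps)
    also have "\<dots> < C"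
      using C assms(2) by (simp add: field_simps) (intro add_nonneg_pos; simp)
    finally show ?thesis by simp
  next
    case False
    then have A: "A > 0" using assms(1) by simp
    have "C \<le> (C / A * A + B / (C / A)) / 2"
      using mean[of "C / A"] A C by simp
    then show ?thesis
      using A C by (simp add: field_simps power2_eq_square)
  qed
qed (simp add: assms)

lemma mult_le_scaled_arith_mean:
  fixes x y t :: real
  assumes "t > 0"
  shows "x * y \<le> (t * x\<^sup>2 + y\<^sup>2 / t) / 2"
proof -
  have "0 \<le> (t * x - y)\<^sup>2 / t"
    using assms by simp
  also have "\<dots> = t * x\<^sup>2 + y\<^sup>2 / t - 2 * x * y"
    using assms by (simp add: power2_eq_square field_simps)
  finally show ?thesis
    by simp
qed

section \<open>Mixtures of pure states\<close>

lemma densityD: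
  assumes "density T \<rho>"
  shows "a \<notin> Pow T \<or> b \<notin> Pow T \<Longrightarrow> \<rho> a b = 0" "\<rho> b a = cnj (\<rho> a b)"
    and "0 \<le> Re (\<Sum>a\<in>Pow T. \<Sum>b\<in>Pow T. cnj (v a) * \<rho> a b * v b)" "(\<Sum>a\<in>Pow T. \<rho> a a) = 1"
  using assms unfolding density_def by blast+

lemma quadratic_form_restrict:
  assumes "finite P" "D \<subseteq> P"
    and "\<And>a b. a \<in> P \<Longrightarrow> b \<in> P \<Longrightarrow> a \<notin> D \<or> b \<notin> D \<Longrightarrow> cnj (v a) * M a b * v b = 0"
  shows "(\<Sum>a\<in>P. \<Sum>b\<in>P. cnj (v a) * M a b * v b) = (\<Sum>a\<in>D. \<Sum>b\<in>D. cnj (v a) * M a b * v b)"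
proof -
  have "(\<Sum>a\<in>P. \<Sum>b\<in>P. cnj (v a) * M a b * v b) = (\<Sum>a\<in>D. \<Sum>b\<in>P. cnj (v a) * M a b * v b)"
    using assms by (intro sum.mono_neutral_right) (auto intro!: sum.neutral)
  also have "\<dots> = (\<Sum>a\<in>D. \<Sum>b\<in>D. cnj (v a) * M a b * v b)"
    using assms by (intro sum.cong refl sum.mono_neutral_right) auto
  finally show ?thesis .
qed

lemma quadratic_form_embed:
  fixes f :: "'b \<Rightarrow> 'a"
  assumes "finite P" "inj f" "range f \<subseteq> P"
  shows "(\<Sum>a\<in>P. \<Sum>b\<in>P. cnj ((\<lambda>a. if a \<in> range f then v (inv f a) else 0) a) * M a b *
      (\<lambda>a. if a \<in> range f then v (inv f a) else 0) b)
    = (\<Sum>s\<in>UNIV. \<Sum>t\<in>UNIV. cnj (v s) * M (f s) (f t) * v t)"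
  using assms by (subst quadratic_form_restrict[where D = "range f"]) (auto simp: sum.reindex)

definition mixture ::
    "'i set \<Rightarrow> ('i \<Rightarrow> real) \<Rightarrow> ('i \<Rightarrow> nat set \<Rightarrow> complex) \<Rightarrow> nat set \<Rightarrow> nat set \<Rightarrow> complex" where
  "mixture X w \<psi> a b = (\<Sum>x\<in>X. complex_of_real (w x) * proj (\<psi> x) a b)"

lemma quadratic_form_mixture:
  assumes "finite X" "finite P"
  shows "(\<Sum>a\<in>P. \<Sum>b\<in>P. cnj (v a) * mixture X w \<psi> a b * v b)
       = (\<Sum>x\<in>X. complex_of_real (w x * (cmod (\<Sum>a\<in>P. cnj (v a) * \<psi> x a))\<^sup>2))"
  unfolding of_real_mult mult_cnj_eq_cmod_sq[symmetric]
  by (simp add: mixture_def proj_def sum_distrib_left sum_distrib_right sum.swap[of _ X] mult_ac)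

lemma density_mixture:
  assumes "finite X" "finite T" "\<And>x. x \<in> X \<Longrightarrow> 0 \<le> w x" "(\<Sum>x\<in>X. w x) = 1"
    and unit: "\<And>x. x \<in> X \<Longrightarrow> unit_vec T (\<psi> x)"
  shows "density T (mixture X w \<psi>)"
  unfolding density_def
proof (intro conjI allI impI)
  fix a b assume "a \<notin> Pow T \<or> b \<notin> Pow T"
  then have "\<psi> x a = 0 \<or> \<psi> x b = 0" if "x \<in> X" for x
    using unit[OF that] by (auto simp: unit_vec_def)
  then show "mixture X w \<psi> a b = 0"
    by (auto simp: mixture_def proj_def intro!: sum.neutral)
next
  fix a b show "mixture X w \<psi> b a = cnj (mixture X w \<psi> a b)"
    by (simp add: mixture_def proj_def mult_ac)
next
  fix v :: "nat set \<Rightarrow> complex"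
  show "0 \<le> Re (\<Sum>a\<in>Pow T. \<Sum>b\<in>Pow T. cnj (v a) * mixture X w \<psi> a b * v b)"
    using assms(3) by (auto simp: quadratic_form_mixture assms(1,2) intro!: sum_nonneg)
next
  have "(\<Sum>a\<in>Pow T. mixture X w \<psi> a a)
      = (\<Sum>x\<in>X. complex_of_real (w x * (\<Sum>a\<in>Pow T. (cmod (\<psi> x a))\<^sup>2)))"
    by (simp add: mixture_def proj_def mult_cnj_eq_cmod_sq sum.swap[of _ X] sum_distrib_left)
  also have "\<dots> = complex_of_real (\<Sum>x\<in>X. w x)"
    using unit by (simp add: unit_vec_def)
  finally show "(\<Sum>a\<in>Pow T. mixture X w \<psi> a a) = 1"
    using assms(4) by simp
qed

lemma biseparable_iff_mixture:
  "biseparable n M \<longleftrightarrow>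
    (\<exists>(m::nat) p \<psi>. (\<forall>i<m. 0 \<le> p i \<and> bisep_pure n (\<psi> i)) \<and> (\<Sum>i<m. p i) = 1 \<and>
      M = mixture {..<m} p \<psi>)"
  by (simp add: biseparable_def mixture_def[abs_def])

lemma biseparable_mixture:
  assumes "finite X" "\<And>x. x \<in> X \<Longrightarrow> 0 \<le> w x" "(\<Sum>x\<in>X. w x) = 1"
    and "\<And>x. x \<in> X \<Longrightarrow> bisep_pure n (\<psi> x)"
  shows "biseparable n (mixture X w \<psi>)"
proof -
  obtain h where h: "bij_betw h {..<card X} X"
    using ex_bij_betw_nat_finite[OF assms(1)] by (auto simp: atLeast0LessThan)
  have "h i \<in> X" if "i < card X" for i
    using h that by (auto simp: bij_betw_def)
  moreover have "(\<Sum>i<card X. w (h i)) = 1"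
    using sum.reindex_bij_betw[OF h, of w] assms(3) by simp
  moreover have "mixture X w \<psi> = mixture {..<card X} (w \<circ> h) (\<psi> \<circ> h)"
    using sum.reindex_bij_betw[OF h, of "\<lambda>x. complex_of_real (w x) * proj (\<psi> x) _ _"]
    by (simp add: mixture_def[abs_def])
  ultimately show ?thesis
    unfolding biseparable_iff_mixture using assms(2,4)
    by (intro exI[of _ "card X"] exI[of _ "w \<circ> h"] exI[of _ "\<psi> \<circ> h"]) auto
qed

lemma ptrace_mixture:
  assumes "x \<subseteq> D" "y \<subseteq> D"
  shows "ptrace n D (mixture X w \<psi>) x y
     = (\<Sum>k\<in>X. complex_of_real (w k) * (\<Sum>c\<in>Pow (qubits n - D). \<psi> k (x \<union> c) * cnj (\<psi> k (y \<union> c))))"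
  using assms by (simp add: ptrace_def mixture_def proj_def sum_distrib_left sum.swap[of _ X])

section \<open>Single-qubit density matrices\<close>

lemma cmod_sq_le_if_nonneg_form:
  fixes a b :: real and Z :: complex
  assumes form: "\<And>v0 v1. 0 \<le> a * (cmod v0)\<^sup>2 + 2 * Re (cnj v0 * Z * v1) + b * (cmod v1)\<^sup>2"
  shows "(cmod Z)\<^sup>2 \<le> a * b"
proof (cases "Z = 0")
  case True
  then show ?thesis
    using form[of 1 0] form[of 0 1] by simp
next
  case False
  have a: "0 \<le> a" and b: "0 \<le> b"
    using form[of 1 0] form[of 0 1] by simp_all
  have "(cmod Z)\<^sup>2 \<le> (t * (a * (cmod Z)\<^sup>2) + b / t) / 2" if t: "t > 0" for t
  proof -
    have "Re (cnj (- complex_of_real t * Z) * Z * 1) = Re (- complex_of_real t * (Z * cnj Z))"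
      by (simp add: mult_ac)
    also have "\<dots> = - t * (cmod Z)\<^sup>2"
      unfolding mult_cnj_eq_cmod_sq by simp
    finally have "0 \<le> a * (t * cmod Z)\<^sup>2 - 2 * t * (cmod Z)\<^sup>2 + b"
      using form[of "- complex_of_real t * Z" 1] t by (simp add: norm_mult)
    then show ?thesis
      using t by (simp add: field_simps power2_eq_square)
  qed
  then have "((cmod Z)\<^sup>2)\<^sup>2 \<le> (a * (cmod Z)\<^sup>2) * b"
    using a b by (intro sq_le_mult_if_le_arith_mean) simp_all
  then show ?thesis
    using False by (simp add: power2_eq_square)
qed

text \<open>A qubit operator is indexed by \<^typ>\<open>bool\<close>, with \<^term>\<open>False\<close> for \<open>|0>\<close> and
  \<^term>\<open>True\<close> for \<open>|1>\<close>.\<close>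

definition qubit_density :: "(bool \<Rightarrow> bool \<Rightarrow> complex) \<Rightarrow> bool" where
  "qubit_density M \<longleftrightarrow>
     (\<forall>s t. M t s = cnj (M s t)) \<and>
     (\<forall>v. 0 \<le> Re (\<Sum>s\<in>UNIV. \<Sum>t\<in>UNIV. cnj (v s) * M s t * v t)) \<and>
     M False False + M True True = 1"

lemma qubit_densityD:
  assumes "qubit_density M"
  shows "M t s = cnj (M s t)" "0 \<le> Re (\<Sum>s\<in>UNIV. \<Sum>t\<in>UNIV. cnj (v s) * M s t * v t)"
    and "M False False + M True True = 1"
  using assms unfolding qubit_density_def by blast+

lemma qubit_density_diagonal_real:
  assumes "qubit_density M"
  shows "M s s = complex_of_real (Re (M s s))"
proof -
  have "Im (M s s) = Im (cnj (M s s))"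
    using qubit_densityD(1)[OF assms, of s s] by (rule arg_cong)
  then show ?thesis
    by (simp add: complex_eq_iff)
qed

lemma qubit_density_entries:
  assumes M: "qubit_density M"
  shows "0 \<le> Re (M s s)" "Re (M False False) + Re (M True True) = 1"
    and "(cmod (M False True))\<^sup>2 \<le> Re (M False False) * Re (M True True)"
proof -
  define a b Z where "a = Re (M False False)" and "b = Re (M True True)" and "Z = M False True"
  have quad: "0 \<le> a * (cmod v0)\<^sup>2 + 2 * Re (cnj v0 * Z * v1) + b * (cmod v1)\<^sup>2" for v0 v1
  proof -
    have "M True False = cnj Z"
      unfolding Z_def by (rule qubit_densityD(1)[OF M])
    moreover have "Re (cnj v1 * cnj Z * v0) = Re (cnj v0 * Z * v1)"
      by (simp add: algebra_simps)
    moreover have "Re (cnj v * M s s * v) = Re (M s s) * (cmod v)\<^sup>2" for v s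
    proof -
      have "Re (cnj v * M s s * v) = Re (complex_of_real (Re (M s s)) * (v * cnj v))"
        by (subst (1) qubit_density_diagonal_real[OF M]) (simp add: mult_ac)
      then show ?thesis
        unfolding mult_cnj_eq_cmod_sq by simp
    qed
    moreover have "0 \<le> Re (\<Sum>s\<in>UNIV. \<Sum>t\<in>UNIV.
        cnj ((\<lambda>s. if s then v1 else v0) s) * M s t * (\<lambda>s. if s then v1 else v0) t)"
      by (rule qubit_densityD(2)[OF M])
    ultimately show ?thesis
      by (simp add: UNIV_bool a_def b_def Z_def) (simp add: algebra_simps)
  qed
  show "0 \<le> Re (M s s)"
    using quad[of 1 0] quad[of 0 1] by (cases s) (simp_all add: a_def b_def)
  show "Re (M False False) + Re (M True True) = 1"
    using qubit_densityD(3)[OF M] by (simp flip: plus_complex.sel)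
  show "(cmod Z)\<^sup>2 \<le> a * b"
    by (rule cmod_sq_le_if_nonneg_form) (rule quad)
qed

lemma convex_combination_unimodular:
  fixes w :: complex
  assumes "cmod w \<le> 1"
  obtains m u v where "0 \<le> m" "m \<le> 1" "cmod u = 1" "cmod v = 1"
    and "w = complex_of_real m * u + complex_of_real (1 - m) * v"
proof -
  define s where "s = sqrt (1 - (Re w)\<^sup>2)"
  have "(cmod w)\<^sup>2 \<le> 1"
    using assms by (simp add: power_le_one)
  then have w: "(Im w)\<^sup>2 \<le> 1 - (Re w)\<^sup>2"
    by (simp add: cmod_power2)
  moreover have "(Re w)\<^sup>2 \<le> 1"
    using w zero_le_power2[of "Im w"] by linarith
  ultimately have s: "s\<^sup>2 = 1 - (Re w)\<^sup>2" "\<bar>Im w\<bar> \<le> s"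
    unfolding s_def by (simp_all add: real_le_rsqrt)
  define m where "m = (if s = 0 then 1 / 2 else (1 + Im w / s) / 2)"
  have m: "0 \<le> m" "m \<le> 1" "s * (2 * m - 1) = Im w"
    using s(2) by (auto simp: m_def field_simps abs_le_iff)
  have "cmod (Complex (Re w) t) = 1" if "t\<^sup>2 = s\<^sup>2" for t
    using that s(1) by (simp add: cmod_def)
  then have "cmod (Complex (Re w) s) = 1" "cmod (Complex (Re w) (- s)) = 1"
    by simp_all
  moreover have "w = complex_of_real m * Complex (Re w) s + complex_of_real (1 - m) * Complex (Re w) (- s)"
    using m(3) by (simp add: complex_eq_iff algebra_simps)
  ultimately show ?thesis
    using that m(1,2) by blast
qed

definition qubit_mix ::
    "(bool \<Rightarrow> real) \<Rightarrow> (bool \<Rightarrow> bool \<Rightarrow> complex) \<Rightarrow> bool \<Rightarrow> bool \<Rightarrow> complex" where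
  "qubit_mix \<mu> \<phi> s t = (\<Sum>r\<in>UNIV. complex_of_real (\<mu> r) * \<phi> r s * cnj (\<phi> r t))"

lemma qubit_mix_swap: "qubit_mix \<mu> \<phi> t s = cnj (qubit_mix \<mu> \<phi> s t)"
  by (simp add: qubit_mix_def mult_ac)

text \<open>A qubit density matrix with diagonal \<open>a, b\<close> and coherence \<open>Z\<close> is the mixture of
  \<open>(sqrt a, sqrt b u)\<close> and \<open>(sqrt a, sqrt b v)\<close> with weights \<open>m, 1 - m\<close>, whenever
  \<open>m u + (1 - m) v = cnj Z / sqrt (a b)\<close>.\<close>

lemma qubit_mix_two_states:
  fixes a b m :: real and u v :: complex
  defines "\<mu> \<equiv> \<lambda>r. if r then m else 1 - m"
    and "\<phi> \<equiv> \<lambda>r s. if s then complex_of_real (sqrt b) * (if r then u else v) else complex_of_real (sqrt a)"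
  assumes ab: "0 \<le> a" "0 \<le> b" and uv: "cmod u = 1" "cmod v = 1"
  shows "qubit_mix \<mu> \<phi> False False = complex_of_real a" "qubit_mix \<mu> \<phi> True True = complex_of_real b"
    and "qubit_mix \<mu> \<phi> False True
      = complex_of_real (sqrt (a * b)) * cnj (complex_of_real m * u + complex_of_real (1 - m) * v)"
proof -
  have sqrt_sq: "complex_of_real (sqrt x) * complex_of_real (sqrt x) = complex_of_real x" if "0 \<le> x" for x
    using that by (simp flip: of_real_mult)
  have unimodular: "u * cnj u = 1" "v * cnj v = 1"
    using uv by (simp_all add: mult_cnj_eq_cmod_sq)
  show "qubit_mix \<mu> \<phi> False False = complex_of_real a"
    using sqrt_sq[OF ab(1)]
    by (simp add: qubit_mix_def UNIV_bool \<mu>_def \<phi>_def flip: distrib_right of_real_add)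
  have "qubit_mix \<mu> \<phi> True True = (complex_of_real m * (u * cnj u) + complex_of_real (1 - m) * (v * cnj v))
      * (complex_of_real (sqrt b) * complex_of_real (sqrt b))"
    by (simp add: qubit_mix_def UNIV_bool \<mu>_def \<phi>_def algebra_simps)
  then show "qubit_mix \<mu> \<phi> True True = complex_of_real b"
    unfolding unimodular sqrt_sq[OF ab(2)] by (simp flip: of_real_add)
  show "qubit_mix \<mu> \<phi> False True
      = complex_of_real (sqrt (a * b)) * cnj (complex_of_real m * u + complex_of_real (1 - m) * v)"
    by (simp add: qubit_mix_def UNIV_bool \<mu>_def \<phi>_def real_sqrt_mult algebra_simps)
qed

lemma qubit_density_mixture:
  assumes M: "qubit_density M"
  shows "\<exists>\<mu> \<phi>. (\<forall>r. 0 \<le> \<mu> r) \<and> \<mu> True + \<mu> False = 1 \<and>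
     (\<forall>r. (cmod (\<phi> r False))\<^sup>2 + (cmod (\<phi> r True))\<^sup>2 = 1) \<and> M = qubit_mix \<mu> \<phi>"
proof -
  define a b Z where "a = Re (M False False)" and "b = Re (M True True)" and "Z = M False True"
  have ab: "0 \<le> a" "0 \<le> b" "a + b = 1" "(cmod Z)\<^sup>2 \<le> a * b"
    using qubit_density_entries[OF M] by (auto simp: a_def b_def Z_def)
  define r where "r = sqrt (a * b)"
  have "cmod Z \<le> r"
    unfolding r_def using ab(4) by (rule real_le_rsqrt)
  then have Z: "Z = complex_of_real r * cnj (cnj Z / complex_of_real r)"
    by (cases "r = 0") simp_all
  have "cmod (cnj Z / complex_of_real r) \<le> 1"
    using \<open>cmod Z \<le> r\<close> by (cases "r = 0") (simp_all add: norm_divide divide_le_eq_1)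
  then obtain m u v where muv: "0 \<le> m" "m \<le> 1" "cmod u = 1" "cmod v = 1"
    and w: "cnj Z / complex_of_real r = complex_of_real m * u + complex_of_real (1 - m) * v"
    by (rule convex_combination_unimodular)
  define \<mu> where "\<mu> = (\<lambda>r. if r then m else 1 - m)"
  define \<phi> where "\<phi> = (\<lambda>r s. if s then complex_of_real (sqrt b) * (if r then u else v) else complex_of_real (sqrt a))"
  note mix = qubit_mix_two_states[OF ab(1,2) muv(3,4), of m, folded \<mu>_def \<phi>_def]
  have "M s t = qubit_mix \<mu> \<phi> s t" for s t
  proof -
    have "M False True = qubit_mix \<mu> \<phi> False True"
      unfolding mix(3) w[symmetric] r_def[symmetric] Z_def[symmetric] by (rule Z)
    moreover have "M s s = qubit_mix \<mu> \<phi> s s"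
      using qubit_density_diagonal_real[OF M, of s] by (cases s) (simp_all add: mix a_def b_def)
    ultimately show ?thesis
      using qubit_densityD(1)[OF M, of True False] qubit_mix_swap[of \<mu> \<phi> True False]
      by (cases s; cases t) simp_all
  qed
  moreover have "(cmod (\<phi> r False))\<^sup>2 + (cmod (\<phi> r True))\<^sup>2 = 1" for r
    using ab muv by (simp add: \<phi>_def norm_mult)
  ultimately show ?thesis
    using muv by (intro exI[of _ \<mu>] exI[of _ \<phi>]) (auto simp: \<mu>_def)
qed

definition qubit_marginal ::
    "nat \<Rightarrow> (nat set \<Rightarrow> nat set \<Rightarrow> complex) \<Rightarrow> nat \<Rightarrow> bool \<Rightarrow> bool \<Rightarrow> complex" where
  "qubit_marginal n \<rho> q s t = ptrace n {q} \<rho> (if s then {q} else {}) (if t then {q} else {})"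

lemma qubit_marginal_eq:
  assumes "q \<in> qubits n"
  shows "qubit_marginal n \<rho> q s t =
    (\<Sum>c\<in>Pow (qubits n - {q}). \<rho> (if s then insert q c else c) (if t then insert q c else c))"
  by (cases s; cases t) (simp_all add: qubit_marginal_def ptrace_def)

lemma qubit_density_qubit_marginal:
  assumes \<rho>: "density (qubits n) \<rho>" and q: "q \<in> qubits n"
  shows "qubit_density (qubit_marginal n \<rho> q)"
  unfolding qubit_density_def
proof (intro conjI allI)
  fix s t
  show "qubit_marginal n \<rho> q t s = cnj (qubit_marginal n \<rho> q s t)"
    unfolding qubit_marginal_eq[OF q] cnj_sum by (intro sum.cong refl densityD(2)[OF \<rho>])
next
  fix v :: "bool \<Rightarrow> complex"
  let ?T = "qubits n - {q}"
  let ?sel = "\<lambda>c s. if s then insert q c else c"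
  have sel: "inj (?sel c)" "range (?sel c) \<subseteq> Pow (qubits n)" if "c \<in> Pow ?T" for c
  proof -
    have "insert q c \<noteq> c"
      using that by auto
    then show "inj (?sel c)"
      by (intro injI) (auto split: if_splits)
    show "range (?sel c) \<subseteq> Pow (qubits n)"
      using that q by auto
  qed
  have "(\<Sum>s\<in>UNIV. \<Sum>t\<in>UNIV. cnj (v s) * qubit_marginal n \<rho> q s t * v t)
      = (\<Sum>c\<in>Pow ?T. \<Sum>s\<in>UNIV. \<Sum>t\<in>UNIV. cnj (v s) * \<rho> (?sel c s) (?sel c t) * v t)"
    by (simp add: qubit_marginal_eq[OF q] sum_distrib_left sum_distrib_right sum.swap[of _ "Pow ?T"])
  also have "\<dots> = (\<Sum>c\<in>Pow ?T. \<Sum>a\<in>Pow (qubits n). \<Sum>b\<in>Pow (qubits n).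
          cnj ((\<lambda>a. if a \<in> range (?sel c) then v (inv (?sel c) a) else 0) a) * \<rho> a b *
          (\<lambda>a. if a \<in> range (?sel c) then v (inv (?sel c) a) else 0) b)"
    using sel by (intro sum.cong refl quadratic_form_embed[symmetric]) auto
  finally show "0 \<le> Re (\<Sum>s\<in>UNIV. \<Sum>t\<in>UNIV. cnj (v s) * qubit_marginal n \<rho> q s t * v t)"
    by (simp only: Re_sum) (intro sum_nonneg densityD(3)[OF \<rho>, unfolded Re_sum])
next
  have "qubit_marginal n \<rho> q False False + qubit_marginal n \<rho> q True True
      = (\<Sum>a\<in>Pow (qubits n). \<rho> a a)"
    using sum_Pow_insert[of "qubits n - {q}" q "\<lambda>a. \<rho> a a"] q
    by (simp add: qubit_marginal_eq[OF q] sum.distrib insert_absorb)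
  then show "qubit_marginal n \<rho> q False False + qubit_marginal n \<rho> q True True = 1"
    using densityD(4)[OF \<rho>] by simp
qed

section \<open>One-body marginals never detect genuine entanglement\<close>

definition product_vec :: "nat \<Rightarrow> (nat \<Rightarrow> bool \<Rightarrow> complex) \<Rightarrow> nat set \<Rightarrow> complex" where
  "product_vec n \<chi> a = (if a \<subseteq> qubits n then \<Prod>q\<in>qubits n. \<chi> q (q \<in> a) else 0)"

definition tensor_qubits ::
    "nat \<Rightarrow> (nat \<Rightarrow> bool \<Rightarrow> bool \<Rightarrow> complex) \<Rightarrow> nat set \<Rightarrow> nat set \<Rightarrow> complex" where
  "tensor_qubits n M a b =
     (if a \<subseteq> qubits n \<and> b \<subseteq> qubits n then \<Prod>q\<in>qubits n. M q (q \<in> a) (q \<in> b) else 0)"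

lemma unit_vec_product_vec:
  assumes "\<And>q. q \<in> qubits n \<Longrightarrow> (cmod (\<chi> q False))\<^sup>2 + (cmod (\<chi> q True))\<^sup>2 = 1"
  shows "unit_vec (qubits n) (product_vec n \<chi>)"
  unfolding unit_vec_def
proof (intro conjI allI impI)
  show "product_vec n \<chi> a = 0" if "a \<notin> Pow (qubits n)" for a
    using that by (simp add: product_vec_def)
  have "(\<Sum>a\<in>Pow (qubits n). (cmod (product_vec n \<chi> a))\<^sup>2)
      = (\<Sum>a\<in>Pow (qubits n). \<Prod>q\<in>qubits n. (cmod (\<chi> q (q \<in> a)))\<^sup>2)"
    by (simp add: product_vec_def prod_power_distrib flip: prod_norm)
  also have "\<dots> = (\<Prod>q\<in>qubits n. (cmod (\<chi> q True))\<^sup>2 + (cmod (\<chi> q False))\<^sup>2)"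
    by (rule sum_Pow_prod) simp
  also have "\<dots> = 1"
    using assms by (simp add: add.commute)
  finally show "(\<Sum>a\<in>Pow (qubits n). (cmod (product_vec n \<chi> a))\<^sup>2) = 1" .
qed

lemma bisep_pure_product_vec:
  assumes "2 \<le> n" "unit_vec (qubits n) (product_vec n \<chi>)"
  shows "bisep_pure n (product_vec n \<chi>)"
proof -
  have one: "1 \<in> qubits n" and two: "2 \<in> qubits n"
    using assms(1) by (simp_all add: qubits_def)
  have "{1} \<noteq> qubits n"
  proof
    assume "{1} = qubits n"
    then have "(2::nat) \<in> {1}"
      using two by simp
    then show False
      by simp
  qed
  then have S: "{1} \<noteq> {}" "{1} \<subset> qubits n"
    using one by auto
  define \<alpha> where "\<alpha> x = \<chi> 1 ((1::nat) \<in> x)" for x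
  define \<beta> where "\<beta> y = (\<Prod>q\<in>qubits n - {1}. \<chi> q (q \<in> y))" for y
  have "product_vec n \<chi> a = \<alpha> (a \<inter> {1}) * \<beta> (a - {1})" if "a \<subseteq> qubits n" for a
  proof -
    have "product_vec n \<chi> a = \<chi> 1 (1 \<in> a) * (\<Prod>q\<in>qubits n - {1}. \<chi> q (q \<in> a))"
      using that one prod.remove[of "qubits n" 1 "\<lambda>q. \<chi> q (q \<in> a)"]
      by (simp add: product_vec_def)
    also have "(\<Prod>q\<in>qubits n - {1}. \<chi> q (q \<in> a)) = \<beta> (a - {1})"
      unfolding \<beta>_def by (rule prod.cong) auto
    finally show ?thesis
      by (simp add: \<alpha>_def)
  qed
  then show ?thesis
    unfolding bisep_pure_def using assms(2) S by blast
qed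

lemma tensor_qubits_eq_mixture:
  assumes "\<And>q. q \<in> qubits n \<Longrightarrow> M q = qubit_mix (\<mu> q) (\<phi> q)"
  shows "tensor_qubits n M =
    mixture (Pow (qubits n)) (\<lambda>R. \<Prod>q\<in>qubits n. \<mu> q (q \<in> R)) (\<lambda>R. product_vec n (\<lambda>q. \<phi> q (q \<in> R)))"
proof (intro ext)
  fix a b
  show "tensor_qubits n M a b = mixture (Pow (qubits n)) (\<lambda>R. \<Prod>q\<in>qubits n. \<mu> q (q \<in> R))
      (\<lambda>R. product_vec n (\<lambda>q. \<phi> q (q \<in> R))) a b"
  proof (cases "a \<subseteq> qubits n \<and> b \<subseteq> qubits n")
    case True
    have "mixture (Pow (qubits n)) (\<lambda>R. \<Prod>q\<in>qubits n. \<mu> q (q \<in> R))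
        (\<lambda>R. product_vec n (\<lambda>q. \<phi> q (q \<in> R))) a b
      = (\<Sum>R\<in>Pow (qubits n). \<Prod>q\<in>qubits n.
          complex_of_real (\<mu> q (q \<in> R)) * \<phi> q (q \<in> R) (q \<in> a) * cnj (\<phi> q (q \<in> R) (q \<in> b)))"
      using True by (simp add: mixture_def product_vec_def proj_def prod.distrib mult.assoc)
    also have "\<dots> = (\<Prod>q\<in>qubits n. qubit_mix (\<mu> q) (\<phi> q) (q \<in> a) (q \<in> b))"
      by (subst sum_Pow_prod) (simp_all add: qubit_mix_def UNIV_bool add.commute)
    also have "\<dots> = tensor_qubits n M a b"
      using True assms by (simp add: tensor_qubits_def)
    finally show ?thesis ..
  next
    case False
    then have "\<not> a \<subseteq> qubits n \<or> \<not> b \<subseteq> qubits n"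
      by simp
    then show ?thesis
      by (elim disjE) (simp_all add: tensor_qubits_def mixture_def product_vec_def proj_def)
  qed
qed

lemma tensor_qubits_density_biseparable:
  assumes "2 \<le> n" "\<And>q. q \<in> qubits n \<Longrightarrow> qubit_density (M q)"
  shows "density (qubits n) (tensor_qubits n M)" "biseparable n (tensor_qubits n M)"
proof -
  have "\<forall>q\<in>qubits n. \<exists>\<mu> \<phi>. (\<forall>r. 0 \<le> \<mu> r) \<and> \<mu> True + \<mu> False = 1 \<and>
     (\<forall>r. (cmod (\<phi> r False))\<^sup>2 + (cmod (\<phi> r True))\<^sup>2 = 1) \<and> M q = qubit_mix \<mu> \<phi>"
    using qubit_density_mixture[OF assms(2)] by blast
  then obtain \<mu> \<phi> where \<mu>: "\<And>q r. q \<in> qubits n \<Longrightarrow> 0 \<le> \<mu> q r"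
      "\<And>q. q \<in> qubits n \<Longrightarrow> \<mu> q True + \<mu> q False = 1"
    and \<phi>: "\<And>q r. q \<in> qubits n \<Longrightarrow> (cmod (\<phi> q r False))\<^sup>2 + (cmod (\<phi> q r True))\<^sup>2 = 1"
    and M: "\<And>q. q \<in> qubits n \<Longrightarrow> M q = qubit_mix (\<mu> q) (\<phi> q)"
    by metis
  define w where "w R = (\<Prod>q\<in>qubits n. \<mu> q (q \<in> R))" for R
  have w: "0 \<le> w R" "(\<Sum>R\<in>Pow (qubits n). w R) = 1" for R
    using \<mu> by (simp_all add: w_def prod_nonneg sum_Pow_prod)
  have unit: "unit_vec (qubits n) (product_vec n (\<lambda>q. \<phi> q (q \<in> R)))" for R
    using \<phi> by (intro unit_vec_product_vec)
  have eq: "tensor_qubits n M = mixture (Pow (qubits n)) w (\<lambda>R. product_vec n (\<lambda>q. \<phi> q (q \<in> R)))"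
    using tensor_qubits_eq_mixture[OF M] by (simp add: w_def[abs_def])
  show "density (qubits n) (tensor_qubits n M)"
    unfolding eq using w unit by (intro density_mixture) simp_all
  show "biseparable n (tensor_qubits n M)"
    unfolding eq using w unit assms(1) by (intro biseparable_mixture bisep_pure_product_vec) simp_all
qed

lemma ptrace_tensor_qubits:
  assumes S: "S \<subseteq> qubits n" and xy: "x \<subseteq> S" "y \<subseteq> S"
    and tr: "\<And>q. q \<in> qubits n - S \<Longrightarrow> M q False False + M q True True = 1"
  shows "ptrace n S (tensor_qubits n M) x y = (\<Prod>q\<in>S. M q (q \<in> x) (q \<in> y))"
proof -
  have "tensor_qubits n M (x \<union> c) (y \<union> c)
      = (\<Prod>q\<in>S. M q (q \<in> x) (q \<in> y)) * (\<Prod>q\<in>qubits n - S. M q (q \<in> c) (q \<in> c))"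
    if c: "c \<subseteq> qubits n - S" for c
  proof -
    have "tensor_qubits n M (x \<union> c) (y \<union> c)
        = (\<Prod>q\<in>qubits n - S. M q (q \<in> x \<union> c) (q \<in> y \<union> c))
          * (\<Prod>q\<in>S. M q (q \<in> x \<union> c) (q \<in> y \<union> c))"
      using c xy S by (simp add: tensor_qubits_def prod.subset_diff[OF S] Un_least order_trans)
    also have "(\<Prod>q\<in>qubits n - S. M q (q \<in> x \<union> c) (q \<in> y \<union> c))
        = (\<Prod>q\<in>qubits n - S. M q (q \<in> c) (q \<in> c))"
    proof (rule prod.cong)
      fix q assume "q \<in> qubits n - S"
      then have "q \<notin> x" "q \<notin> y"
        using xy by auto
      then show "M q (q \<in> x \<union> c) (q \<in> y \<union> c) = M q (q \<in> c) (q \<in> c)"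
        by simp
    qed simp
    also have "(\<Prod>q\<in>S. M q (q \<in> x \<union> c) (q \<in> y \<union> c)) = (\<Prod>q\<in>S. M q (q \<in> x) (q \<in> y))"
    proof (rule prod.cong)
      fix q assume "q \<in> S"
      then have "q \<notin> c"
        using c by auto
      then show "M q (q \<in> x \<union> c) (q \<in> y \<union> c) = M q (q \<in> x) (q \<in> y)"
        by simp
    qed simp
    finally show ?thesis
      by (simp add: mult.commute)
  qed
  then have "ptrace n S (tensor_qubits n M) x y
      = (\<Prod>q\<in>S. M q (q \<in> x) (q \<in> y)) * (\<Sum>c\<in>Pow (qubits n - S). \<Prod>q\<in>qubits n - S. M q (q \<in> c) (q \<in> c))"
    using xy by (simp add: ptrace_def sum_distrib_left)
  also have "(\<Sum>c\<in>Pow (qubits n - S). \<Prod>q\<in>qubits n - S. M q (q \<in> c) (q \<in> c)) = 1"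
    using tr by (subst sum_Pow_prod) (simp_all add: add.commute)
  finally show ?thesis
    by simp
qed

lemma ptrace_tensor_qubit_marginal:
  assumes \<rho>: "density (qubits n) \<rho>" and S: "S \<subseteq> qubits n" "card S \<le> 1"
  shows "ptrace n S (tensor_qubits n (qubit_marginal n \<rho>)) = ptrace n S \<rho>"
proof (intro ext)
  fix x y
  show "ptrace n S (tensor_qubits n (qubit_marginal n \<rho>)) x y = ptrace n S \<rho> x y"
  proof (cases "x \<subseteq> S \<and> y \<subseteq> S")
    case xy: True
    have "ptrace n S (tensor_qubits n (qubit_marginal n \<rho>)) x y = (\<Prod>q\<in>S. qubit_marginal n \<rho> q (q \<in> x) (q \<in> y))"
      using xy S qubit_densityD(3)[OF qubit_density_qubit_marginal[OF \<rho>]] by (intro ptrace_tensor_qubits) auto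
    also have "\<dots> = ptrace n S \<rho> x y"
    proof (cases "S = {}")
      case True
      then show ?thesis
        using xy densityD(4)[OF \<rho>] by (simp add: ptrace_def)
    next
      case False
      then have "card S = 1"
        using S finite_subset_qubits[OF S(1)] by (simp add: le_Suc_eq)
      then obtain q where "S = {q}"
        by (rule card_1_singletonE)
      moreover have "x = (if q \<in> x then {q} else {})" "y = (if q \<in> y then {q} else {})"
        using xy calculation by auto
      ultimately show ?thesis
        by (simp add: qubit_marginal_def)
    qed
    finally show ?thesis .
  next
    case False
    show ?thesis
      unfolding ptrace_def if_not_P[OF False] ..
  qed
qed

lemma exists_biseparable_compat_one_body:
  assumes \<rho>: "density (qubits n) \<rho>" and n: "2 \<le> n"
    and \<S>: "\<S> \<subseteq> Pow (qubits n)" "\<forall>S\<in>\<S>. card S \<le> 1"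
  shows "\<exists>\<sigma>\<in>compat n \<rho> \<S>. biseparable n \<sigma>"
proof
  let ?\<sigma> = "tensor_qubits n (qubit_marginal n \<rho>)"
  note \<sigma> = tensor_qubits_density_biseparable[of n "qubit_marginal n \<rho>", OF n qubit_density_qubit_marginal[OF \<rho>]]
  show "biseparable n ?\<sigma>"
    using \<sigma>(2) .
  show "?\<sigma> \<in> compat n \<rho> \<S>"
    using \<sigma>(1) \<S> ptrace_tensor_qubit_marginal[OF \<rho>] by (auto simp: compat_def)
qed

section \<open>Dicke mixtures are not determined by their proper marginals\<close>

lemma dicke_mix_eq_mixture: "dicke_mix n lam = mixture {0..n} lam (dicke n)"
  by (simp add: dicke_mix_def[abs_def] mixture_def[abs_def])

lemma card_le_if_subset_qubits: "a \<subseteq> qubits n \<Longrightarrow> card a \<le> n"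
  using card_mono[of "qubits n" a] by simp

lemma proj_dicke:
  assumes "a \<subseteq> qubits n" "b \<subseteq> qubits n"
  shows "proj (dicke n i) a b =
     (if card a = i \<and> card b = i then complex_of_real (1 / real (n choose i)) else 0)"
proof (cases "card a = i \<and> card b = i")
  case True
  then have "0 < real (n choose i)"
    using card_le_if_subset_qubits[OF assms(1)] by simp
  then show ?thesis
    using True assms by (simp add: proj_def dicke_def flip: of_real_mult)
qed (auto simp: proj_def dicke_def)

lemma dicke_mix_entry:
  assumes "a \<subseteq> qubits n" "b \<subseteq> qubits n"
  shows "dicke_mix n lam a b =
     (if card a = card b then complex_of_real (lam (card a) / real (n choose card a)) else 0)"
proof -
  have "dicke_mix n lam a b = (\<Sum>i=0..n. if i = card a then
      (if card a = card b then complex_of_real (lam (card a) / real (n choose card a)) else 0) else 0)"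
    unfolding dicke_mix_def by (intro sum.cong refl) (auto simp: proj_dicke[OF assms])
  then show ?thesis
    using card_le_if_subset_qubits[OF assms(1)] by simp
qed

lemma unit_vec_dicke:
  assumes "i \<le> n"
  shows "unit_vec (qubits n) (dicke n i)"
  unfolding unit_vec_def
proof (intro conjI allI impI)
  show "dicke n i a = 0" if "a \<notin> Pow (qubits n)" for a
    using that by (simp add: dicke_def)
  have pos: "0 < real (n choose i)"
    using assms by simp
  have "(\<Sum>a\<in>Pow (qubits n). (cmod (dicke n i a))\<^sup>2)
      = (\<Sum>a\<in>Pow (qubits n). if card a = i then 1 / real (n choose i) else 0)"
    using pos by (intro sum.cong) (simp_all add: dicke_def norm_divide power_divide)
  also have "\<dots> = real (card {a \<in> Pow (qubits n). card a = i}) / real (n choose i)"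
    by (simp add: sum.If_cases Int_def)
  also have "card {a \<in> Pow (qubits n). card a = i} = n choose i"
    using n_subsets[of "qubits n" i] by (simp add: Pow_def conj_commute)
  finally show "(\<Sum>a\<in>Pow (qubits n). (cmod (dicke n i a))\<^sup>2) = 1"
    using pos by simp
qed

lemma density_dicke_mix:
  assumes "\<forall>i\<in>{0..n}. 0 \<le> lam i" "(\<Sum>i=0..n. lam i) = 1"
  shows "density (qubits n) (dicke_mix n lam)"
  unfolding dicke_mix_eq_mixture
  using assms by (intro density_mixture unit_vec_dicke) auto

text \<open>The operator \<open>|0...0><1...1| + |1...1><0...0|\<close> is invisible in every marginal on fewer
  than \<open>n\<close> qubits.\<close>

definition ghz_coherence :: "nat \<Rightarrow> nat set \<Rightarrow> nat set \<Rightarrow> complex" where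
  "ghz_coherence n a b = (if (a = {} \<and> b = qubits n) \<or> (a = qubits n \<and> b = {}) then 1 else 0)"

lemma ptrace_add_ghz_coherence:
  assumes "S \<subseteq> qubits n" "S \<noteq> qubits n"
  shows "ptrace n S (\<lambda>a b. M a b + z * ghz_coherence n a b) = ptrace n S M"
proof (intro ext)
  fix x y
  have "ghz_coherence n (x \<union> c) (y \<union> c) = 0" if "x \<subseteq> S" "y \<subseteq> S" "c \<subseteq> qubits n - S" for c
    using that assms by (auto simp: ghz_coherence_def)
  then show "ptrace n S (\<lambda>a b. M a b + z * ghz_coherence n a b) x y = ptrace n S M x y"
    by (simp add: ptrace_def sum.distrib)
qed

lemma quadratic_form_ghz_coherence:
  assumes "1 \<le> n"
  shows "(\<Sum>a\<in>Pow (qubits n). \<Sum>b\<in>Pow (qubits n). cnj (v a) * ghz_coherence n a b * v b)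
       = cnj (v {}) * v (qubits n) + cnj (v (qubits n)) * v {}"
proof -
  have "{} \<noteq> qubits n"
    using assms by (auto simp: qubits_def)
  then show ?thesis
    by (subst quadratic_form_restrict[where D = "{{}, qubits n}"]) (auto simp: ghz_coherence_def)
qed

lemma inner_dicke_extreme:
  shows "(\<Sum>a\<in>Pow (qubits n). cnj (v a) * dicke n 0 a) = cnj (v {})"
    and "(\<Sum>a\<in>Pow (qubits n). cnj (v a) * dicke n n a) = cnj (v (qubits n))"
proof -
  have "(\<Sum>a\<in>Pow (qubits n). cnj (v a) * dicke n 0 a) = (\<Sum>a\<in>Pow (qubits n). if a = {} then cnj (v {}) else 0)"
    by (rule sum.cong) (auto simp: dicke_def dest: finite_subset_qubits)
  then show "(\<Sum>a\<in>Pow (qubits n). cnj (v a) * dicke n 0 a) = cnj (v {})"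
    by simp
  have "(\<Sum>a\<in>Pow (qubits n). cnj (v a) * dicke n n a) = (\<Sum>a\<in>Pow (qubits n). if a = qubits n then cnj (v (qubits n)) else 0)"
    by (rule sum.cong) (auto simp: dicke_def dest: card_subset_eq[OF finite_qubits])
  then show "(\<Sum>a\<in>Pow (qubits n). cnj (v a) * dicke n n a) = cnj (v (qubits n))"
    by simp
qed

lemma quadratic_form_dicke_mix_ge:
  assumes "\<forall>i\<in>{0..n}. 0 \<le> lam i" "1 \<le> n"
  shows "lam 0 * (cmod (v {}))\<^sup>2 + lam n * (cmod (v (qubits n)))\<^sup>2
    \<le> Re (\<Sum>a\<in>Pow (qubits n). \<Sum>b\<in>Pow (qubits n). cnj (v a) * dicke_mix n lam a b * v b)"
proof -
  let ?f = "\<lambda>i. lam i * (cmod (\<Sum>a\<in>Pow (qubits n). cnj (v a) * dicke n i a))\<^sup>2"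
  have "?f 0 + ?f n = (\<Sum>i\<in>{0, n}. ?f i)"
    using assms(2) by simp
  also have "\<dots> \<le> (\<Sum>i\<in>{0..n}. ?f i)"
    using assms(1) by (intro sum_mono2) auto
  also have "\<dots> = Re (\<Sum>a\<in>Pow (qubits n). \<Sum>b\<in>Pow (qubits n). cnj (v a) * dicke_mix n lam a b * v b)"
    by (simp add: dicke_mix_eq_mixture quadratic_form_mixture)
  finally show ?thesis
    by (simp add: inner_dicke_extreme)
qed

lemma quadratic_form_dicke_mix_add_ghz_coherence_nonneg:
  assumes lam: "\<forall>i\<in>{0..n}. 0 \<le> lam i" and n: "1 \<le> n"
    and \<epsilon>: "0 \<le> \<epsilon>" "\<epsilon> \<le> lam 0" "\<epsilon> \<le> lam n"
  shows "0 \<le> Re (\<Sum>a\<in>Pow (qubits n). \<Sum>b\<in>Pow (qubits n).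
    cnj (v a) * (dicke_mix n lam a b + complex_of_real \<epsilon> * ghz_coherence n a b) * v b)"
proof -
  let ?x = "v {}" and ?y = "v (qubits n)"
  let ?Q = "\<lambda>M. \<Sum>a\<in>Pow (qubits n). \<Sum>b\<in>Pow (qubits n). cnj (v a) * M a b * v b"
  have "- (cmod ?x * cmod ?y) \<le> Re (cnj ?x * ?y)"
    using abs_Re_le_cmod[of "cnj ?x * ?y"] by (simp add: norm_mult abs_le_iff)
  then have "- (\<epsilon> * (cmod ?x * cmod ?y)) \<le> \<epsilon> * Re (cnj ?x * ?y)"
    using mult_left_mono[of _ _ \<epsilon>] \<epsilon>(1) by fastforce
  moreover have "2 * (\<epsilon> * (cmod ?x * cmod ?y)) \<le> \<epsilon> * ((cmod ?x)\<^sup>2 + (cmod ?y)\<^sup>2)"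
    using mult_left_mono[OF sum_squares_bound[of "cmod ?x" "cmod ?y"] \<epsilon>(1)]
    by (simp add: algebra_simps)
  moreover have "\<epsilon> * ((cmod ?x)\<^sup>2 + (cmod ?y)\<^sup>2) \<le> lam 0 * (cmod ?x)\<^sup>2 + lam n * (cmod ?y)\<^sup>2"
    using \<epsilon> by (simp add: distrib_left add_mono mult_right_mono)
  moreover have "Re (?Q (\<lambda>a b. dicke_mix n lam a b + complex_of_real \<epsilon> * ghz_coherence n a b))
      = Re (?Q (dicke_mix n lam)) + 2 * (\<epsilon> * Re (cnj ?x * ?y))"
  proof -
    have "?Q (\<lambda>a b. dicke_mix n lam a b + complex_of_real \<epsilon> * ghz_coherence n a b)
        = ?Q (dicke_mix n lam) + complex_of_real \<epsilon> * ?Q (ghz_coherence n)"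
      by (simp add: algebra_simps sum.distrib sum_distrib_left)
    moreover have "Re (cnj ?y * ?x) = Re (cnj ?x * ?y)"
      by (simp add: algebra_simps)
    ultimately show ?thesis
      unfolding quadratic_form_ghz_coherence[OF n] by simp
  qed
  ultimately show ?thesis
    using quadratic_form_dicke_mix_ge[OF lam n, of v] by linarith
qed

lemma density_dicke_mix_add_ghz_coherence:
  assumes lam: "\<forall>i\<in>{0..n}. 0 \<le> lam i" "(\<Sum>i=0..n. lam i) = 1" and n: "1 \<le> n"
    and \<epsilon>: "0 \<le> \<epsilon>" "\<epsilon> \<le> lam 0" "\<epsilon> \<le> lam n"
  shows "density (qubits n) (\<lambda>a b. dicke_mix n lam a b + complex_of_real \<epsilon> * ghz_coherence n a b)"
  unfolding density_def
proof (intro conjI allI impI)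
  note \<rho> = density_dicke_mix[OF lam]
  have "{} \<noteq> qubits n"
    using n by (auto simp: qubits_def)
  then have ghz: "ghz_coherence n a a = 0" "ghz_coherence n b a = cnj (ghz_coherence n a b)" for a b
    by (auto simp: ghz_coherence_def)
  show "dicke_mix n lam a b + complex_of_real \<epsilon> * ghz_coherence n a b = 0"
    if "a \<notin> Pow (qubits n) \<or> b \<notin> Pow (qubits n)" for a b
  proof -
    have "ghz_coherence n a b = 0"
      using that by (auto simp: ghz_coherence_def)
    then show ?thesis
      using densityD(1)[OF \<rho> that] by simp
  qed
  show "dicke_mix n lam b a + complex_of_real \<epsilon> * ghz_coherence n b a
      = cnj (dicke_mix n lam a b + complex_of_real \<epsilon> * ghz_coherence n a b)" for a b
    using densityD(2)[OF \<rho>, of a b] ghz(2)[of a b] by simp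
  show "(\<Sum>a\<in>Pow (qubits n). dicke_mix n lam a a + complex_of_real \<epsilon> * ghz_coherence n a a) = 1"
    using densityD(4)[OF \<rho>] by (simp add: ghz(1))
next
  fix v :: "nat set \<Rightarrow> complex"
  show "0 \<le> Re (\<Sum>a\<in>Pow (qubits n). \<Sum>b\<in>Pow (qubits n).
      cnj (v a) * (dicke_mix n lam a b + complex_of_real \<epsilon> * ghz_coherence n a b) * v b)"
    using quadratic_form_dicke_mix_add_ghz_coherence_nonneg[OF lam(1) n \<epsilon>] .
qed

lemma not_determines_dicke_mix:
  assumes lam: "\<forall>i\<in>{0..n}. 0 \<le> lam i" "(\<Sum>i=0..n. lam i) = 1" "lam 0 * lam n \<noteq> 0" and n: "1 \<le> n"
    and \<S>: "\<S> \<subseteq> Pow (qubits n)" "\<forall>S\<in>\<S>. card S < n"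
  shows "\<not> determines n \<S> (dicke_mix n lam)"
proof
  assume det: "determines n \<S> (dicke_mix n lam)"
  define \<epsilon> where "\<epsilon> = min (lam 0) (lam n)"
  have "0 \<le> lam 0" "0 \<le> lam n" "lam 0 \<noteq> 0" "lam n \<noteq> 0"
    using lam(1,3) by simp_all
  then have "0 < \<epsilon>"
    by (simp add: \<epsilon>_def)
  define \<sigma> where "\<sigma> a b = dicke_mix n lam a b + complex_of_real \<epsilon> * ghz_coherence n a b" for a b
  have "density (qubits n) \<sigma>"
    unfolding \<sigma>_def[abs_def] using \<open>0 < \<epsilon>\<close>
    by (intro density_dicke_mix_add_ghz_coherence lam n) (simp_all add: \<epsilon>_def)
  moreover have "ptrace n S \<sigma> = ptrace n S (dicke_mix n lam)" if "S \<in> \<S>" for S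
    using that \<S> unfolding \<sigma>_def[abs_def] by (intro ptrace_add_ghz_coherence) auto
  ultimately have "\<sigma> = dicke_mix n lam"
    using det by (auto simp: determines_def compat_def)
  then have "\<sigma> {} (qubits n) = dicke_mix n lam {} (qubits n)"
    by simp
  then show False
    using \<open>0 < \<epsilon>\<close> by (simp add: \<sigma>_def ghz_coherence_def)
qed

section \<open>Symmetric biseparable pure states\<close>

definition symmetric_vec :: "nat \<Rightarrow> (nat set \<Rightarrow> complex) \<Rightarrow> bool" where
  "symmetric_vec n \<psi> \<longleftrightarrow> (\<forall>a b. a \<subseteq> qubits n \<longrightarrow> b \<subseteq> qubits n \<longrightarrow> card a = card b \<longrightarrow> \<psi> a = \<psi> b)"

lemma symmetric_vecD:
  "symmetric_vec n \<psi> \<Longrightarrow> a \<subseteq> qubits n \<Longrightarrow> b \<subseteq> qubits n \<Longrightarrow> card a = card b \<Longrightarrow> \<psi> a = \<psi> b"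
  unfolding symmetric_vec_def by blast

lemma symmetric_vec_if_swap_invariant:
  assumes swap: "\<And>i j c. i \<in> qubits n \<Longrightarrow> j \<in> qubits n \<Longrightarrow> i \<noteq> j \<Longrightarrow> c \<subseteq> qubits n - {i, j} \<Longrightarrow>
      \<psi> (insert i c) = \<psi> (insert j c)"
  shows "symmetric_vec n \<psi>"
  unfolding symmetric_vec_def
proof (intro allI impI)
  fix a b assume "a \<subseteq> qubits n" "b \<subseteq> qubits n" "card a = card b"
  then show "\<psi> a = \<psi> b"
  proof (induction "card (a - b)" arbitrary: a rule: less_induct)
    case less
    note fin = finite_subset_qubits
    show ?case
    proof (cases "a \<subseteq> b")
      case True
      then show ?thesis
        using less.prems card_subset_eq[OF fin] by metis
    next
      case False
      then obtain i where i: "i \<in> a" "i \<notin> b"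
        by auto
      have "\<not> b \<subseteq> a"
        using False less.prems card_subset_eq[OF fin[OF less.prems(1)]] by metis
      then obtain j where j: "j \<in> b" "j \<notin> a"
        by auto
      define a' where "a' = insert j (a - {i})"
      have "\<psi> (insert i (a - {i})) = \<psi> a'"
        unfolding a'_def using less.prems i j by (intro swap) auto
      then have "\<psi> a = \<psi> a'"
        using i by (simp add: insert_absorb)
      moreover have "card a' = card b"
        using less.prems(3) card_Suc_Diff1[OF fin[OF less.prems(1)] i(1)] j fin[OF less.prems(1)]
        by (simp add: a'_def)
      moreover have "a' - b = (a - b) - {i}"
        using j by (auto simp: a'_def)
      then have "card (a' - b) < card (a - b)"
        using i fin[OF less.prems(1)] by (simp only: card_Diff1_less_iff) simp
      moreover have "a' \<subseteq> qubits n"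
        using less.prems j by (auto simp: a'_def)
      ultimately show ?thesis
        using less.hyps[OF _ _ less.prems(2)] by simp
    qed
  qed
qed

lemma sum_Pow_symmetric_vec_transfer:
  assumes sy: "symmetric_vec n \<psi>"
    and D: "D \<subseteq> qubits n" "D' \<subseteq> qubits n" "card D = card D'"
    and X: "X \<subseteq> D" "X' \<subseteq> D'" "card X = card X'"
  shows "(\<Sum>c\<in>Pow (qubits n - D). f (\<psi> (X \<union> c))) = (\<Sum>c\<in>Pow (qubits n - D'). f (\<psi> (X' \<union> c)))"
proof -
  have finD: "finite D" "finite D'" using finite_subset[OF D(1)] finite_subset[OF D(2)] by simp_all
  have "card (qubits n - D) = card (qubits n - D')"
    using D finD by (simp add: card_Diff_subset)
  then obtain g where g: "bij_betw g (qubits n - D) (qubits n - D')"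
    using finite_same_card_bij[of "qubits n - D" "qubits n - D'"] by auto
  have gP: "bij_betw (image g) (Pow (qubits n - D)) (Pow (qubits n - D'))"
    by (rule bij_betw_image_Pow[OF g])
  have "(\<Sum>c\<in>Pow (qubits n - D'). f (\<psi> (X' \<union> c))) = (\<Sum>c\<in>Pow (qubits n - D). f (\<psi> (X' \<union> g ` c)))"
    using sum.reindex_bij_betw[OF gP, of "\<lambda>c. f (\<psi> (X' \<union> c))"] by simp
  also have "\<dots> = (\<Sum>c\<in>Pow (qubits n - D). f (\<psi> (X \<union> c)))"
  proof (intro sum.cong refl)
    fix c assume c: "c \<in> Pow (qubits n - D)"
    have finc: "finite c" using c finite_subset[of c "qubits n"] by auto
    have injc: "inj_on g c" using g c by (auto simp: bij_betw_def intro: inj_on_subset)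
    have gc: "g ` c \<subseteq> qubits n - D'" using g c by (auto simp: bij_betw_def)
    have finX: "finite X" "finite X'" using X finD finite_subset by auto
    have "card (X' \<union> g ` c) = card X' + card (g ` c)"
      by (rule card_Un_disjoint) (use finX finc gc X in auto)
    also have "card (g ` c) = card c" by (rule card_image[OF injc])
    also have "card X' + card c = card (X \<union> c)"
      using X c finX finc by (subst card_Un_disjoint) auto
    finally have "card (X' \<union> g ` c) = card (X \<union> c)" .
    moreover have "X' \<union> g ` c \<subseteq> qubits n" "X \<union> c \<subseteq> qubits n" using gc c X D by auto
    ultimately show "f (\<psi> (X' \<union> g ` c)) = f (\<psi> (X \<union> c))"
      using symmetric_vecD[OF sy] by metis
  qed
  finally show ?thesis by simp
qed

text \<open>The diagonal entry at \<open>X \<subseteq> {1, 2}\<close> of the marginal of \<open>|\<psi>><\<psi>|\<close> on qubits 1 and 2.\<close>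

definition pair_weight :: "nat \<Rightarrow> (nat set \<Rightarrow> complex) \<Rightarrow> nat set \<Rightarrow> real" where
  "pair_weight n \<psi> X = (\<Sum>c\<in>Pow (qubits n - {1, 2}). (cmod (\<psi> (X \<union> c)))\<^sup>2)"

lemma product_across_cut_exchange:
  fixes \<alpha> \<beta> :: "nat set \<Rightarrow> 'a :: comm_semiring_1"
  assumes prod: "\<And>a. a \<subseteq> qubits n \<Longrightarrow> \<psi> a = \<alpha> (a \<inter> S) * \<beta> (a - S)"
    and S: "S \<subseteq> qubits n" and i: "i \<in> S" and j: "j \<in> qubits n - S" and c: "c \<subseteq> qubits n - {i, j}"
  shows "\<psi> (insert i c) * \<psi> (insert j c) = \<psi> c * \<psi> (insert i (insert j c))"
proof -
  have sub: "insert i c \<subseteq> qubits n" "insert j c \<subseteq> qubits n" "insert i (insert j c) \<subseteq> qubits n" "c \<subseteq> qubits n"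
    using S i j c by auto
  have cut: "insert i c \<inter> S = insert i (c \<inter> S)" "insert i c - S = c - S"
    "insert j c \<inter> S = c \<inter> S" "insert j c - S = insert j (c - S)"
    "insert i (insert j c) \<inter> S = insert i (c \<inter> S)" "insert i (insert j c) - S = insert j (c - S)"
    using i j by auto
  show ?thesis
    unfolding prod[OF sub(1)] prod[OF sub(2)] prod[OF sub(3)] prod[OF sub(4)] cut by (simp add: mult_ac)
qed

lemma cmod_sq_eq_of_bisep_symmetric:
  assumes sy: "symmetric_vec n \<psi>"
    and prod: "\<And>a. a \<subseteq> qubits n \<Longrightarrow> \<psi> a = \<alpha> (a \<inter> S) * \<beta> (a - S)"
    and S: "S \<subseteq> qubits n" and i: "i \<in> S" and j: "j \<in> qubits n - S" and c: "c \<subseteq> qubits n - {i, j}"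
  shows "(cmod (\<psi> (insert i c)))\<^sup>2 = cmod (\<psi> c) * cmod (\<psi> (insert i (insert j c)))"
proof -
  have "finite c" "i \<notin> c" "j \<notin> c"
    using c finite_subset[of c "qubits n"] by auto
  then have "\<psi> (insert i c) = \<psi> (insert j c)"
    using i j S c by (intro symmetric_vecD[OF sy]) auto
  moreover have "\<psi> (insert i c) * \<psi> (insert j c) = \<psi> c * \<psi> (insert i (insert j c))"
    using c S i j by (intro product_across_cut_exchange[of n \<psi> \<alpha> S \<beta>, OF prod]) auto
  ultimately show ?thesis
    by (metis norm_mult power2_eq_square)
qed

lemma pair_weight_le_of_bisep_symmetric:
  assumes sy: "symmetric_vec n \<psi>" and bp: "bisep_pure n \<psi>" and n: "2 \<le> n" and t: "t > 0"
  shows "pair_weight n \<psi> {1} \<le> (t * pair_weight n \<psi> {} + pair_weight n \<psi> {1, 2} / t) / 2"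
proof -
  obtain S \<alpha> \<beta> where S: "S \<noteq> {}" "S \<subset> qubits n"
    and prod: "\<And>a. a \<subseteq> qubits n \<Longrightarrow> \<psi> a = \<alpha> (a \<inter> S) * \<beta> (a - S)"
    using bp unfolding bisep_pure_def by blast
  obtain i j where i: "i \<in> S" and j: "j \<in> qubits n - S"
    using S by blast
  then have ij: "i \<noteq> j" "i \<in> qubits n"
    using S by auto
  let ?W = "\<lambda>X. \<Sum>c\<in>Pow (qubits n - {i, j}). (cmod (\<psi> (X \<union> c)))\<^sup>2"
  have "(cmod (\<psi> ({i} \<union> c)))\<^sup>2
      \<le> (t * (cmod (\<psi> ({} \<union> c)))\<^sup>2 + (cmod (\<psi> ({i, j} \<union> c)))\<^sup>2 / t) / 2"
    if "c \<in> Pow (qubits n - {i, j})" for c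
    using cmod_sq_eq_of_bisep_symmetric[OF sy prod _ i j, of c] mult_le_scaled_arith_mean[OF t] S that
    by simp
  then have "?W {i} \<le> (\<Sum>c\<in>Pow (qubits n - {i, j}).
      (t * (cmod (\<psi> ({} \<union> c)))\<^sup>2 + (cmod (\<psi> ({i, j} \<union> c)))\<^sup>2 / t) / 2)"
    by (rule sum_mono)
  also have "\<dots> = (t * ?W {} + ?W {i, j} / t) / 2"
    by (simp only: sum.distrib sum_distrib_left sum_divide_distrib add_divide_distrib)
  finally have "?W {i} \<le> (t * ?W {} + ?W {i, j} / t) / 2" .
  moreover have W: "?W X = pair_weight n \<psi> X'" if "X \<subseteq> {i, j}" "X' \<subseteq> {1, 2}" "card X = card X'" for X X'
    unfolding pair_weight_def using that ij j n
    by (intro sum_Pow_symmetric_vec_transfer[OF sy]) (auto simp: qubits_def)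
  moreover have "?W {i} = pair_weight n \<psi> {1}" "?W {} = pair_weight n \<psi> {}"
    by (rule W; simp)+
  moreover have "?W {i, j} = pair_weight n \<psi> {1, 2}"
    using ij by (intro W) simp_all
  ultimately show ?thesis
    by simp
qed

section \<open>Two-body marginals of Dicke mixtures detect genuine entanglement\<close>

text \<open>The diagonal entry of any two-qubit marginal of \<^const>\<open>dicke_mix\<close> at a configuration with
  \<open>k\<close> excited qubits.\<close>

definition dicke_pair_weight :: "nat \<Rightarrow> (nat \<Rightarrow> real) \<Rightarrow> nat \<Rightarrow> real" where
  "dicke_pair_weight n lam k = (\<Sum>s\<le>n - 2. real (n - 2 choose s) * (lam (s + k) / real (n choose (s + k))))"

lemma ptrace_pair_dicke_mix:
  assumes ij: "i \<in> qubits n" "j \<in> qubits n" "i \<noteq> j"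
    and xy: "x \<subseteq> {i, j}" "y \<subseteq> {i, j}" "card x = card y"
  shows "ptrace n {i, j} (dicke_mix n lam) x y = complex_of_real (dicke_pair_weight n lam (card x))"
proof -
  let ?T = "qubits n - {i, j}"
  have "dicke_mix n lam (x \<union> c) (y \<union> c) = complex_of_real (lam (card c + card x) / real (n choose (card c + card x)))"
    if "c \<in> Pow ?T" for c
  proof -
    have "finite c" "finite x" "finite y"
      using that xy finite_subset[of c "qubits n"] finite_subset[of _ "{i, j}"] by auto
    moreover have "x \<inter> c = {}" "y \<inter> c = {}"
      using that xy by auto
    ultimately have "card (x \<union> c) = card c + card x" "card (y \<union> c) = card c + card x"
      using xy(3) by (simp_all add: card_Un_disjoint)
    moreover have "x \<union> c \<subseteq> qubits n" "y \<union> c \<subseteq> qubits n"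
      using that xy ij by auto
    ultimately show ?thesis
      by (simp add: dicke_mix_entry)
  qed
  then have "ptrace n {i, j} (dicke_mix n lam) x y
      = complex_of_real (\<Sum>c\<in>Pow ?T. lam (card c + card x) / real (n choose (card c + card x)))"
    using xy by (simp add: ptrace_def of_real_sum)
  also have "(\<Sum>c\<in>Pow ?T. lam (card c + card x) / real (n choose (card c + card x)))
      = (\<Sum>s\<le>card ?T. real (card ?T choose s) * (lam (s + card x) / real (n choose (s + card x))))"
    by (simp add: sum_Pow_card[of ?T "\<lambda>s. lam (s + card x) / real (n choose (s + card x))"] add.commute)
  also have "card ?T = n - 2"
    using ij by (simp add: card_Diff_subset)
  finally show ?thesis
    by (simp only: dicke_pair_weight_def)
qed

text \<open>The hypothesis says that the marginal on \<open>{i, j}\<close> has no weight on the singlet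
  \<open>|01> - |10>\<close>; this weight is a positive combination of the norms of the antisymmetric parts of
  the components.\<close>

lemma mixture_swap_invariant:
  assumes X: "finite X" "\<And>k. k \<in> X \<Longrightarrow> 0 \<le> w k"
    and eq: "ptrace n {i, j} (mixture X w \<psi>) {i} {i} + ptrace n {i, j} (mixture X w \<psi>) {j} {j}
      = ptrace n {i, j} (mixture X w \<psi>) {i} {j} + ptrace n {i, j} (mixture X w \<psi>) {j} {i}"
    and k: "k \<in> X" "0 < w k" and c: "c \<subseteq> qubits n - {i, j}"
  shows "\<psi> k (insert i c) = \<psi> k (insert j c)"
proof -
  define E where "E k = (\<Sum>c\<in>Pow (qubits n - {i, j}). (cmod (\<psi> k ({i} \<union> c) - \<psi> k ({j} \<union> c)))\<^sup>2)" for k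
  let ?P = "ptrace n {i, j} (mixture X w \<psi>)"
  have "?P {i} {i} + ?P {j} {j} - ?P {i} {j} - ?P {j} {i} = (\<Sum>k\<in>X. complex_of_real (w k) *
      (\<Sum>c\<in>Pow (qubits n - {i, j}). \<psi> k ({i} \<union> c) * cnj (\<psi> k ({i} \<union> c))
        + \<psi> k ({j} \<union> c) * cnj (\<psi> k ({j} \<union> c)) - \<psi> k ({i} \<union> c) * cnj (\<psi> k ({j} \<union> c))
        - \<psi> k ({j} \<union> c) * cnj (\<psi> k ({i} \<union> c))))"
    by (simp add: ptrace_mixture sum.distrib sum_subtractf distrib_left right_diff_distrib)
  also have "\<dots> = complex_of_real (\<Sum>k\<in>X. w k * E k)"
    unfolding cmod_diff_sq by (simp add: E_def of_real_sum)
  finally have "complex_of_real (\<Sum>k\<in>X. w k * E k) = 0"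
    using eq by (simp del: of_real_sum)
  then have "(\<Sum>k\<in>X. w k * E k) = 0"
    by (simp only: of_real_eq_0_iff)
  moreover have "0 \<le> w k * E k" if "k \<in> X" for k
    using X(2)[OF that] by (simp add: E_def sum_nonneg)
  ultimately have "E k = 0"
    using k X(1) sum_nonneg_eq_0_iff[of X "\<lambda>k. w k * E k"] by auto
  then have "(cmod (\<psi> k ({i} \<union> c) - \<psi> k ({j} \<union> c)))\<^sup>2 = 0"
    using c X(1) by (simp add: E_def sum_nonneg_eq_0_iff)
  then show ?thesis
    by simp
qed

lemma choose_mult_falling_two:
  fixes m s :: nat
  shows "((m + 2) choose s) * ((m + 2 - s) * (m + 1 - s)) = (m + 2) * (m + 1) * (m choose s)"
    and "((m + 2) choose (s + 1)) * ((s + 1) * (m + 1 - s)) = (m + 2) * (m + 1) * (m choose s)"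
    and "((m + 2) choose (s + 2)) * ((s + 2) * (s + 1)) = (m + 2) * (m + 1) * (m choose s)"
proof -
  have a2: "(m + 2 - s) * ((m + 2) choose s) = (m + 2) * ((m + 1) choose s)"
    using binomial_absorb_comp[of "m + 2" s] by simp
  have a1: "(m + 1 - s) * ((m + 1) choose s) = (m + 1) * (m choose s)"
    using binomial_absorb_comp[of "m + 1" s] by simp
  have s2: "((m + 2) choose (s + 1)) * (s + 1) = (m + 2) * ((m + 1) choose s)"
    using Suc_times_binomial_eq[of "m + 1" s] by (simp del: binomial_Suc_Suc)
  have s2': "((m + 2) choose (s + 2)) * (s + 2) = (m + 2) * ((m + 1) choose (s + 1))"
    using Suc_times_binomial_eq[of "m + 1" "s + 1"] by (simp del: binomial_Suc_Suc)
  have s1: "((m + 1) choose (s + 1)) * (s + 1) = (m + 1) * (m choose s)"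
    using Suc_times_binomial_eq[of m s] by (simp del: binomial_Suc_Suc)
  show "((m + 2) choose s) * ((m + 2 - s) * (m + 1 - s)) = (m + 2) * (m + 1) * (m choose s)"
    using a1 a2 by (metis mult.assoc mult.commute)
  show "((m + 2) choose (s + 1)) * ((s + 1) * (m + 1 - s)) = (m + 2) * (m + 1) * (m choose s)"
    using a1 s2 by (metis mult.assoc mult.commute)
  show "((m + 2) choose (s + 2)) * ((s + 2) * (s + 1)) = (m + 2) * (m + 1) * (m choose s)"
    using s1 s2' by (metis mult.assoc mult.commute)
qed

lemma dicke_pair_weight_scaled_eq_sum:
  fixes w :: "nat \<Rightarrow> real"
  assumes n: "n = m + 2" and k: "k \<le> 2"
    and scale: "\<And>s. s \<le> m \<Longrightarrow> real (n choose (s + k)) * w (s + k) = real n * (real n - 1) * real (m choose s)"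
    and vanish: "\<And>i. i \<le> n \<Longrightarrow> i < k \<or> m + k < i \<Longrightarrow> w i = 0"
  shows "real n * (real n - 1) * dicke_pair_weight n lam k = (\<Sum>i=0..n. w i * lam i)"
proof -
  have "(\<Sum>i=0..n. w i * lam i) = (\<Sum>i=0+k..m+k. w i * lam i)"
    using vanish k n by (intro sum.mono_neutral_right) auto
  also have "\<dots> = (\<Sum>s\<le>m. w (s + k) * lam (s + k))"
    by (simp only: sum.shift_bounds_cl_nat_ivl atLeast0AtMost)
  also have "\<dots> = (\<Sum>s\<le>m. real n * (real n - 1) * (real (m choose s) * (lam (s + k) / real (n choose (s + k)))))"
  proof (rule sum.cong)
    fix s assume "s \<in> {..m}"
    then have "0 < real (n choose (s + k))"
      using n k by simp
    then have "w (s + k) = real n * (real n - 1) * real (m choose s) / real (n choose (s + k))"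
      using scale[of s] \<open>s \<in> {..m}\<close> by (simp add: eq_divide_eq mult.commute)
    then show "w (s + k) * lam (s + k) = real n * (real n - 1) * (real (m choose s) * (lam (s + k) / real (n choose (s + k))))"
      by simp
  qed simp
  finally show ?thesis
    using n by (simp add: dicke_pair_weight_def sum_distrib_left)
qed

lemma dicke_pair_weight_eq_sums:
  assumes "2 \<le> n"
  shows "real n * (real n - 1) * dicke_pair_weight n lam 0
      = (\<Sum>i=0..n. (real n - real i) * (real n - real i - 1) * lam i)"
    and "real n * (real n - 1) * dicke_pair_weight n lam 1 = (\<Sum>i=0..n. real i * (real n - real i) * lam i)"
    and "real n * (real n - 1) * dicke_pair_weight n lam 2 = (\<Sum>i=0..n. real i * (real i - 1) * lam i)"
proof -
  obtain m where n: "n = m + 2"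
    using assms le_Suc_ex by (metis add.commute)
  show "real n * (real n - 1) * dicke_pair_weight n lam 0
      = (\<Sum>i=0..n. (real n - real i) * (real n - real i - 1) * lam i)"
  proof (rule dicke_pair_weight_scaled_eq_sum[OF n])
    fix s assume "s \<le> m"
    then show "real (n choose (s + 0)) * ((real n - real (s + 0)) * (real n - real (s + 0) - 1))
        = real n * (real n - 1) * real (m choose s)"
      using arg_cong[OF choose_mult_falling_two(1)[of m s], of real, unfolded of_nat_mult] n
      by (simp add: of_nat_diff algebra_simps)
  qed (auto simp: n le_Suc_eq)
  show "real n * (real n - 1) * dicke_pair_weight n lam 1 = (\<Sum>i=0..n. real i * (real n - real i) * lam i)"
  proof (rule dicke_pair_weight_scaled_eq_sum[OF n])
    fix s assume "s \<le> m"
    then show "real (n choose (s + 1)) * (real (s + 1) * (real n - real (s + 1)))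
        = real n * (real n - 1) * real (m choose s)"
      using arg_cong[OF choose_mult_falling_two(2)[of m s], of real, unfolded of_nat_mult] n
      by (simp add: of_nat_diff algebra_simps)
  qed (auto simp: n le_Suc_eq)
  show "real n * (real n - 1) * dicke_pair_weight n lam 2 = (\<Sum>i=0..n. real i * (real i - 1) * lam i)"
  proof (rule dicke_pair_weight_scaled_eq_sum[OF n])
    fix s assume "s \<le> m"
    then show "real (n choose (s + 2)) * (real (s + 2) * (real (s + 2) - 1))
        = real n * (real n - 1) * real (m choose s)"
      using arg_cong[OF choose_mult_falling_two(3)[of m s], of real, unfolded of_nat_mult] n
      by (simp add: of_nat_diff algebra_simps)
  qed (auto simp: n le_Suc_eq)
qed

lemma dicke_pair_weight_nonneg:
  assumes "\<forall>i\<in>{0..n}. 0 \<le> lam i"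
  shows "0 \<le> dicke_pair_weight n lam k"
  unfolding dicke_pair_weight_def
proof (intro sum_nonneg mult_nonneg_nonneg)
  fix s show "0 \<le> lam (s + k) / real (n choose (s + k))"
    using assms by (cases "s + k \<le> n") (auto simp: binomial_eq_0)
qed simp

lemma ptrace_pair_mixture_diagonal:
  assumes "X \<subseteq> {1, 2}"
  shows "ptrace n {1, 2} (mixture K p \<psi>) X X = complex_of_real (\<Sum>k\<in>K. p k * pair_weight n (\<psi> k) X)"
  using assms by (simp add: ptrace_mixture mult_cnj_eq_cmod_sq pair_weight_def)

lemma pair_weight_mixture_le:
  assumes "\<And>k. k \<in> K \<Longrightarrow> 0 \<le> p k"
    and "\<And>k. k \<in> K \<Longrightarrow> 0 < p k \<Longrightarrow> symmetric_vec n (\<psi> k) \<and> bisep_pure n (\<psi> k)"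
    and "2 \<le> n" "t > 0"
  shows "(\<Sum>k\<in>K. p k * pair_weight n (\<psi> k) {1})
    \<le> (t * (\<Sum>k\<in>K. p k * pair_weight n (\<psi> k) {}) + (\<Sum>k\<in>K. p k * pair_weight n (\<psi> k) {1, 2}) / t) / 2"
proof -
  have "p k * pair_weight n (\<psi> k) {1}
      \<le> (t * (p k * pair_weight n (\<psi> k) {}) + p k * pair_weight n (\<psi> k) {1, 2} / t) / 2" if "k \<in> K" for k
  proof (cases "p k = 0")
    case False
    then have "pair_weight n (\<psi> k) {1} \<le> (t * pair_weight n (\<psi> k) {} + pair_weight n (\<psi> k) {1, 2} / t) / 2"
      using assms(1)[OF that] assms(2)[OF that] pair_weight_le_of_bisep_symmetric[OF _ _ assms(3,4)] by simp
    then show ?thesis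
      using mult_left_mono[OF _ assms(1)[OF that]] by (fastforce simp: algebra_simps)
  qed simp
  then have "(\<Sum>k\<in>K. p k * pair_weight n (\<psi> k) {1})
      \<le> (\<Sum>k\<in>K. (t * (p k * pair_weight n (\<psi> k) {}) + p k * pair_weight n (\<psi> k) {1, 2} / t) / 2)"
    by (rule sum_mono)
  also have "\<dots> = (t * (\<Sum>k\<in>K. p k * pair_weight n (\<psi> k) {}) + (\<Sum>k\<in>K. p k * pair_weight n (\<psi> k) {1, 2}) / t) / 2"
    by (simp add: sum.distrib sum_distrib_left sum_divide_distrib add_divide_distrib)
  finally show ?thesis .
qed

lemma dicke_pair_weight_sq_le_if_biseparable_compat:
  assumes n: "2 \<le> n" and lam: "\<forall>i\<in>{0..n}. 0 \<le> lam i" and \<sigma>: "biseparable n \<sigma>"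
    and marg: "\<And>i j. i \<in> qubits n \<Longrightarrow> j \<in> qubits n \<Longrightarrow> i \<noteq> j \<Longrightarrow>
      ptrace n {i, j} \<sigma> = ptrace n {i, j} (dicke_mix n lam)"
  shows "(dicke_pair_weight n lam 1)\<^sup>2 \<le> dicke_pair_weight n lam 0 * dicke_pair_weight n lam 2"
proof -
  obtain m :: nat and p \<psi> where p: "\<forall>k<m. 0 \<le> p k \<and> bisep_pure n (\<psi> k)"
    and \<sigma>_eq: "\<sigma> = mixture {..<m} p \<psi>"
    using \<sigma> unfolding biseparable_iff_mixture by blast
  have sym: "symmetric_vec n (\<psi> k)" if "k < m" "0 < p k" for k
  proof (rule symmetric_vec_if_swap_invariant)
    fix i j c assume ij: "i \<in> qubits n" "j \<in> qubits n" "i \<noteq> j" and c: "c \<subseteq> qubits n - {i, j}"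
    have "ptrace n {i, j} (mixture {..<m} p \<psi>) x y = complex_of_real (dicke_pair_weight n lam 1)"
      if "x \<in> {{i}, {j}}" "y \<in> {{i}, {j}}" for x y
      using that marg[OF ij] ptrace_pair_dicke_mix[OF ij, of x y] by (auto simp: \<sigma>_eq)
    then show "\<psi> k (insert i c) = \<psi> k (insert j c)"
      using p that c by (intro mixture_swap_invariant[of "{..<m}" p]) auto
  qed
  have one_two: "(1::nat) \<in> qubits n" "(2::nat) \<in> qubits n" "(1::nat) \<noteq> 2"
    using n by (auto simp: qubits_def)
  have weight: "dicke_pair_weight n lam (card X) = (\<Sum>k<m. p k * pair_weight n (\<psi> k) X)" if "X \<subseteq> {1, 2}" for X
  proof -
    have "complex_of_real (dicke_pair_weight n lam (card X)) = complex_of_real (\<Sum>k<m. p k * pair_weight n (\<psi> k) X)"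
      using ptrace_pair_dicke_mix[OF one_two that that] ptrace_pair_mixture_diagonal[OF that, of n "{..<m}" p \<psi>]
        marg[OF one_two] by (simp add: \<sigma>_eq)
    then show ?thesis
      by (simp only: of_real_eq_iff)
  qed
  have "dicke_pair_weight n lam 0 = (\<Sum>k<m. p k * pair_weight n (\<psi> k) {})"
    "dicke_pair_weight n lam 1 = (\<Sum>k<m. p k * pair_weight n (\<psi> k) {1})"
    "dicke_pair_weight n lam 2 = (\<Sum>k<m. p k * pair_weight n (\<psi> k) {1, 2})"
    using weight[of "{}"] weight[of "{1}"] weight[of "{1, 2}"] by (simp_all add: numeral_2_eq_2)
  then have "dicke_pair_weight n lam 1 \<le> (t * dicke_pair_weight n lam 0 + dicke_pair_weight n lam 2 / t) / 2"
    if "t > 0" for t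
    using pair_weight_mixture_le[of "{..<m}" p n \<psi> t] p sym n that by simp
  moreover have "0 \<le> dicke_pair_weight n lam k" for k
    using lam by (rule dicke_pair_weight_nonneg)
  ultimately show ?thesis
    by (intro sq_le_mult_if_le_arith_mean) auto
qed

lemma double_sum_eq_product_diff:
  fixes lam :: "nat \<Rightarrow> real"
  shows "(\<Sum>i=0..n. \<Sum>j=0..n. (real n - real i) * real j * lam i * lam j *
            ((real n - real i - 1) * (real j - 1) - real i * (real n - real j)))
    = (\<Sum>i=0..n. (real n - real i) * (real n - real i - 1) * lam i) * (\<Sum>i=0..n. real i * (real i - 1) * lam i)
      - (\<Sum>i=0..n. real i * (real n - real i) * lam i)\<^sup>2"
  unfolding power2_eq_square sum_product sum_subtractf[symmetric]
  by (intro sum.cong refl) (simp add: algebra_simps)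

lemma detects_GME_dicke_mix:
  assumes n: "2 \<le> n" and lam: "\<forall>i\<in>{0..n}. 0 \<le> lam i"
    and neg: "(\<Sum>i=0..n. \<Sum>j=0..n. (real n - real i) * real j * lam i * lam j *
               ((real n - real i - 1) * (real j - 1) - real i * (real n - real j))) < 0"
  shows "detects_GME n {S. S \<subseteq> qubits n \<and> card S = 2} (dicke_mix n lam)"
  unfolding detects_GME_def genuinely_entangled_def
proof (intro ballI notI)
  fix \<sigma> assume "\<sigma> \<in> compat n (dicke_mix n lam) {S. S \<subseteq> qubits n \<and> card S = 2}" "biseparable n \<sigma>"
  then have "(dicke_pair_weight n lam 1)\<^sup>2 \<le> dicke_pair_weight n lam 0 * dicke_pair_weight n lam 2"
    using n lam by (intro dicke_pair_weight_sq_le_if_biseparable_compat[of n lam \<sigma>]) (auto simp: compat_def)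
  then have "(real n * (real n - 1))\<^sup>2 * (dicke_pair_weight n lam 1)\<^sup>2
      \<le> (real n * (real n - 1))\<^sup>2 * (dicke_pair_weight n lam 0 * dicke_pair_weight n lam 2)"
    by (rule mult_left_mono) simp
  then have "(real n * (real n - 1) * dicke_pair_weight n lam 1)\<^sup>2
      \<le> (real n * (real n - 1) * dicke_pair_weight n lam 0) * (real n * (real n - 1) * dicke_pair_weight n lam 2)"
    by (simp only: power_mult_distrib power2_eq_square ac_simps)
  then show False
    using neg unfolding double_sum_eq_product_diff dicke_pair_weight_eq_sums[OF n] by simp
qed

section \<open>The lengths of determining and detecting families\<close>

lemma ptrace_qubits:
  assumes "density (qubits n) \<sigma>"
  shows "ptrace n (qubits n) \<sigma> = \<sigma>"
proof (intro ext)
  fix a b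
  show "ptrace n (qubits n) \<sigma> a b = \<sigma> a b"
    using densityD(1)[OF assms, of a b] by (auto simp: ptrace_def)
qed

lemma determines_qubits:
  assumes "density (qubits n) \<rho>"
  shows "determines n {qubits n} \<rho>"
  using assms ptrace_qubits[OF assms] ptrace_qubits[of n] by (auto simp: determines_def compat_def)

lemma L_num_le:
  assumes "\<S> \<subseteq> Pow (qubits n)" "determines n \<S> \<rho>" "\<forall>S\<in>\<S>. card S \<le> k"
  shows "L_num n \<rho> \<le> k"
  unfolding L_num_def using assms by (intro Least_le) blast

lemma l_num_le:
  assumes "\<S> \<subseteq> Pow (qubits n)" "detects_GME n \<S> \<rho>" "\<forall>S\<in>\<S>. card S \<le> k"
  shows "l_num n \<rho> \<le> k"
  unfolding l_num_def using assms by (intro Least_le) blast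

lemma L_num_le_card:
  assumes "density (qubits n) \<rho>"
  shows "L_num n \<rho> \<le> n"
  using determines_qubits[OF assms] by (intro L_num_le[of "{qubits n}"]) auto

lemma L_num_witness:
  assumes "density (qubits n) \<rho>"
  obtains \<S> where "\<S> \<subseteq> Pow (qubits n)" "determines n \<S> \<rho>" "\<forall>S\<in>\<S>. card S \<le> L_num n \<rho>"
proof -
  have "\<exists>k \<S>. \<S> \<subseteq> Pow (qubits n) \<and> determines n \<S> \<rho> \<and> (\<forall>S\<in>\<S>. card S \<le> k)"
    using determines_qubits[OF assms] by (intro exI[of _ n] exI[of _ "{qubits n}"]) auto
  then have "\<exists>\<S>. \<S> \<subseteq> Pow (qubits n) \<and> determines n \<S> \<rho> \<and> (\<forall>S\<in>\<S>. card S \<le> L_num n \<rho>)"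
    unfolding L_num_def by (rule LeastI_ex)
  then show ?thesis
    using that by blast
qed

lemma l_num_witness:
  assumes "density (qubits n) \<rho>" "genuinely_entangled n \<rho>"
  obtains \<S> where "\<S> \<subseteq> Pow (qubits n)" "detects_GME n \<S> \<rho>" "\<forall>S\<in>\<S>. card S \<le> l_num n \<rho>"
proof -
  have "detects_GME n {qubits n} \<rho>"
    using determines_qubits[OF assms(1)] assms(2) by (simp add: determines_def detects_GME_def)
  then have "\<exists>k \<S>. \<S> \<subseteq> Pow (qubits n) \<and> detects_GME n \<S> \<rho> \<and> (\<forall>S\<in>\<S>. card S \<le> k)"
    by (intro exI[of _ n] exI[of _ "{qubits n}"]) auto
  then have "\<exists>\<S>. \<S> \<subseteq> Pow (qubits n) \<and> detects_GME n \<S> \<rho> \<and> (\<forall>S\<in>\<S>. card S \<le> l_num n \<rho>)"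
    unfolding l_num_def by (rule LeastI_ex)
  then show ?thesis
    using that by blast
qed

lemma two_le_l_num:
  assumes "density (qubits n) \<rho>" "genuinely_entangled n \<rho>" "2 \<le> n"
  shows "2 \<le> l_num n \<rho>"
proof (rule ccontr)
  assume "\<not> 2 \<le> l_num n \<rho>"
  obtain \<S> where \<S>: "\<S> \<subseteq> Pow (qubits n)" "detects_GME n \<S> \<rho>" "\<forall>S\<in>\<S>. card S \<le> l_num n \<rho>"
    using l_num_witness[OF assms(1,2)] .
  then have "\<forall>S\<in>\<S>. card S \<le> 1"
    using \<open>\<not> 2 \<le> l_num n \<rho>\<close> by fastforce
  then obtain \<sigma> where "\<sigma> \<in> compat n \<rho> \<S>" "biseparable n \<sigma>"
    using exists_biseparable_compat_one_body[OF assms(1,3) \<S>(1)] by blast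
  then show False
    using \<S>(2) by (auto simp: detects_GME_def genuinely_entangled_def)
qed

lemma L_num_dicke_mix:
  assumes lam: "\<forall>i\<in>{0..n}. 0 \<le> lam i" "(\<Sum>i=0..n. lam i) = 1" "lam 0 * lam n \<noteq> 0" and n: "1 \<le> n"
  shows "L_num n (dicke_mix n lam) = n"
proof -
  note \<rho> = density_dicke_mix[OF lam(1,2)]
  obtain \<S> where "\<S> \<subseteq> Pow (qubits n)" "determines n \<S> (dicke_mix n lam)"
    "\<forall>S\<in>\<S>. card S \<le> L_num n (dicke_mix n lam)"
    using L_num_witness[OF \<rho>] .
  then have "\<not> L_num n (dicke_mix n lam) < n"
    using not_determines_dicke_mix[OF lam n] by fastforce
  then show ?thesis
    using L_num_le_card[OF \<rho>] by simp
qed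

theorem proposition7:
  fixes n :: nat
  assumes "n \<ge> 2"
  shows "(\<forall>\<rho>. density (qubits n) \<rho> \<and> genuinely_entangled n \<rho> \<longrightarrow>
            int (L_num n \<rho>) - int (l_num n \<rho>) \<le> max 0 (int n - 2))
       \<and> (\<forall>lam :: nat \<Rightarrow> real.
            (\<forall>i\<in>{0..n}. 0 \<le> lam i) \<and> (\<Sum>i=0..n. lam i) = 1 \<and> lam 0 * lam n \<noteq> 0 \<and>
            (\<Sum>i=0..n. \<Sum>j=0..n. (real n - real i) * real j * lam i * lam j *
               ((real n - real i - 1) * (real j - 1) - real i * (real n - real j))) < 0
            \<longrightarrow> genuinely_entangled n (dicke_mix n lam) \<and>
                L_num n (dicke_mix n lam) = n \<and> l_num n (dicke_mix n lam) = 2 \<and>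
                int (L_num n (dicke_mix n lam)) - int (l_num n (dicke_mix n lam)) = int n - 2)"
proof (intro conjI allI impI; elim conjE)
  fix \<rho> assume "density (qubits n) \<rho>" "genuinely_entangled n \<rho>"
  then show "int (L_num n \<rho>) - int (l_num n \<rho>) \<le> max 0 (int n - 2)"
    using L_num_le_card two_le_l_num assms by fastforce
next
  fix lam :: "nat \<Rightarrow> real"
  assume lam: "\<forall>i\<in>{0..n}. 0 \<le> lam i" "(\<Sum>i=0..n. lam i) = 1" "lam 0 * lam n \<noteq> 0"
    and neg: "(\<Sum>i=0..n. \<Sum>j=0..n. (real n - real i) * real j * lam i * lam j *
               ((real n - real i - 1) * (real j - 1) - real i * (real n - real j))) < 0"
  let ?\<rho> = "dicke_mix n lam" and ?\<S> = "{S. S \<subseteq> qubits n \<and> card S = 2}"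
  have \<rho>: "density (qubits n) ?\<rho>"
    using density_dicke_mix[OF lam(1,2)] .
  have detects: "detects_GME n ?\<S> ?\<rho>"
    using detects_GME_dicke_mix[OF assms lam(1) neg] .
  then show gme: "genuinely_entangled n ?\<rho>"
    using \<rho> by (auto simp: detects_GME_def compat_def)
  show L: "L_num n ?\<rho> = n"
    using L_num_dicke_mix[OF lam] assms by simp
  have "l_num n ?\<rho> \<le> 2"
    using detects by (intro l_num_le[of ?\<S>]) auto
  then show l: "l_num n ?\<rho> = 2"
    using two_le_l_num[OF \<rho> gme assms] by simp
  show "int (L_num n ?\<rho>) - int (l_num n ?\<rho>) = int n - 2"
    using L l by simp
qed

end
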